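(* Let $\kappa > 0$ and let $(X,d)$ be a compact CAT$(\kappa)$ space such that $d(v,w) < \pi/(2\sqrt{\kappa})$ for all $v,w \in X$. Let $N \ge 1$ and let $f = \sum_{i=1}^N f_i$, where each $f_i : X \to (-\infty,\infty]$ is proper, convex and lower semi-continuous, and suppose $f$ attains its minimum. Let $x_0 \in X$ and let $(\lambda_j)_{j\ge0}$ be a sequence of positive real numbers with $\sum_{j \ge 0}\lambda_j = \infty$ and $\sum_{j\ge 0}\lambda_j^2 < \infty$. Define $(x_n)$ by \[ x_{jN+i} = J^i_{\lambda_j}(x_{jN+i-1}), \qquad j \ge 0,\ i \in \{1,\ldots,N\}, \] where $J^i_\lambda(x) = \operatorname{argmin}_{y\in X}\left[f_i(y) + \frac{1}{\lambda}\Psi_x(y)\right]$. Suppose there exists $L > 0$ such that for every $j \in \mathbb{N}$ and $i \in \{1,\ldots,N\}$, \[ f_i(x_{jN}) - f_i(x_{jN+i}) \le L\, d(x_{jN},x_{jN+i}) \quad\text{and}\quad f_i(x_{jN+i-1}) - f_i(x_{jN+i}) \le L\, d(x_{jN+i-1},x_{jN+i}). \] Then $(x_n)$ converges to a minimum point of $f$.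
   Context: A CAT$(\kappa)$ space ($\kappa>0$) is a metric space in which any two points at distance $<\pi/\sqrt{\kappa}$ are joined by a geodesic and every geodesic triangle of perimeter $<2\pi/\sqrt{\kappa}$ satisfies the CAT$(\kappa)$ comparison inequality with respect to its comparison triangle in the sphere of constant curvature $\kappa$. Writing $(1-t)x+ty$ for the point at distance $t\,d(x,y)$ from $x$ on the geodesic from $x$ to $y$, a function $g$ is convex if $g((1-t)x+ty) \le (1-t)g(x)+tg(y)$ for all $x,y$, $t\in[0,1]$; proper means not identically $\infty$. For $x \in X$, $\Psi_x : X \to [0,\infty)$ is $\Psi_x(y) = \frac{1}{\kappa\cos(\sqrt{\kappa}\,d(y,x))} - \frac{\cos(\sqrt{\kappa}\,d(y,x))}{\kappa}$; for each proper convex lower semi-continuous $g$ and $\lambda>0$ the minimizer $\operatorname{argmin}_{y\in X}[g(y)+\frac1\lambda\Psi_x(y)]$ exists and is unique under the stated assumptions, so the $J^i_\lambda$ are well-defined maps $X\to X$. *)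

theory Defs
  imports "HOL-Analysis.Analysis" "HOL-Library.Extended_Real"
begin

definition geodesic_in :: "'a::metric_space set \<Rightarrow> 'a \<Rightarrow> 'a \<Rightarrow> (real \<Rightarrow> 'a) \<Rightarrow> bool" where
  "geodesic_in X x y \<gamma> \<longleftrightarrow> \<gamma> 0 = x \<and> \<gamma> (dist x y) = y \<and>
     (\<forall>s\<in>{0..dist x y}. \<gamma> s \<in> X) \<and>
     (\<forall>s\<in>{0..dist x y}. \<forall>t\<in>{0..dist x y}. dist (\<gamma> s) (\<gamma> t) = \<bar>s - t\<bar>)"

text \<open>Model space of constant curvature kappa > 0: the sphere of radius 1/sqrt kappa in R^3
  with its intrinsic (great-circle) distance.\<close>
definition model_sphere :: "real \<Rightarrow> (real^3) set" where
  "model_sphere \<kappa> = {u. norm u = 1 / sqrt \<kappa>}"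

definition sdist :: "real \<Rightarrow> real^3 \<Rightarrow> real^3 \<Rightarrow> real" where
  "sdist \<kappa> u v = arccos (\<kappa> * (u \<bullet> v)) / sqrt \<kappa>"

definition on_model_seg :: "real \<Rightarrow> real^3 \<Rightarrow> real^3 \<Rightarrow> real \<Rightarrow> real^3 \<Rightarrow> bool" where
  "on_model_seg \<kappa> A B s z \<longleftrightarrow> z \<in> model_sphere \<kappa> \<and> sdist \<kappa> A z = s \<and> sdist \<kappa> z B = sdist \<kappa> A B - s"

definition side_cmp :: "real \<Rightarrow> 'a::metric_space \<Rightarrow> 'a \<Rightarrow> (real \<Rightarrow> 'a) \<Rightarrow> real^3 \<Rightarrow> real^3
     \<Rightarrow> 'a \<Rightarrow> 'a \<Rightarrow> (real \<Rightarrow> 'a) \<Rightarrow> real^3 \<Rightarrow> real^3 \<Rightarrow> bool" where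
  "side_cmp \<kappa> a b g A B a' b' g' A' B' \<longleftrightarrow>
     (\<forall>s\<in>{0..dist a b}. \<forall>t\<in>{0..dist a' b'}. \<forall>z z'.
        on_model_seg \<kappa> A B s z \<and> on_model_seg \<kappa> A' B' t z' \<longrightarrow> dist (g s) (g' t) \<le> sdist \<kappa> z z')"

definition comparison_triangle :: "real \<Rightarrow> 'a::metric_space \<Rightarrow> 'a \<Rightarrow> 'a \<Rightarrow> real^3 \<Rightarrow> real^3 \<Rightarrow> real^3 \<Rightarrow> bool" where
  "comparison_triangle \<kappa> p q r P Q R \<longleftrightarrow>
     P \<in> model_sphere \<kappa> \<and> Q \<in> model_sphere \<kappa> \<and> R \<in> model_sphere \<kappa> \<and>
     sdist \<kappa> P Q = dist p q \<and> sdist \<kappa> Q R = dist q r \<and> sdist \<kappa> R P = dist r p"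

definition CAT_space :: "real \<Rightarrow> 'a::metric_space set \<Rightarrow> bool" where
  "CAT_space \<kappa> X \<longleftrightarrow>
     (\<forall>x\<in>X. \<forall>y\<in>X. dist x y < pi / sqrt \<kappa> \<longrightarrow> (\<exists>\<gamma>. geodesic_in X x y \<gamma>)) \<and>
     (\<forall>p\<in>X. \<forall>q\<in>X. \<forall>r\<in>X. \<forall>g1 g2 g3.
        geodesic_in X p q g1 \<and> geodesic_in X q r g2 \<and> geodesic_in X r p g3 \<and>
        dist p q + dist q r + dist r p < 2 * pi / sqrt \<kappa> \<longrightarrow>
        (\<forall>P Q R. comparison_triangle \<kappa> p q r P Q R \<longrightarrow>
           side_cmp \<kappa> p q g1 P Q p q g1 P Q \<and> side_cmp \<kappa> p q g1 P Q q r g2 Q R \<and>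
           side_cmp \<kappa> p q g1 P Q r p g3 R P \<and>
           side_cmp \<kappa> q r g2 Q R p q g1 P Q \<and> side_cmp \<kappa> q r g2 Q R q r g2 Q R \<and>
           side_cmp \<kappa> q r g2 Q R r p g3 R P \<and>
           side_cmp \<kappa> r p g3 R P p q g1 P Q \<and> side_cmp \<kappa> r p g3 R P q r g2 Q R \<and>
           side_cmp \<kappa> r p g3 R P r p g3 R P))"

definition geo_convex :: "'a::metric_space set \<Rightarrow> ('a \<Rightarrow> ereal) \<Rightarrow> bool" where
  "geo_convex X g \<longleftrightarrow> (\<forall>x\<in>X. \<forall>y\<in>X. \<forall>\<gamma>. geodesic_in X x y \<gamma> \<longrightarrow>
     (\<forall>t\<in>{0..1}. g (\<gamma> (t * dist x y)) \<le> ereal (1 - t) * g x + ereal t * g y))"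

definition lsc_on :: "'a::metric_space set \<Rightarrow> ('a \<Rightarrow> ereal) \<Rightarrow> bool" where
  "lsc_on X g \<longleftrightarrow> (\<forall>x\<in>X. \<forall>u. (\<forall>n. u n \<in> X) \<and> u \<longlonglongrightarrow> x \<longrightarrow> g x \<le> liminf (\<lambda>n. g (u n)))"

definition proper_on :: "'a set \<Rightarrow> ('a \<Rightarrow> ereal) \<Rightarrow> bool" where
  "proper_on X g \<longleftrightarrow> (\<exists>x\<in>X. g x \<noteq> \<infinity>)"

definition Psi :: "real \<Rightarrow> 'a::metric_space \<Rightarrow> 'a \<Rightarrow> real" where
  "Psi \<kappa> x y = 1 / (\<kappa> * cos (sqrt \<kappa> * dist y x)) - cos (sqrt \<kappa> * dist y x) / \<kappa>"

definition resolvent :: "real \<Rightarrow> 'a::metric_space set \<Rightarrow> ('a \<Rightarrow> ereal) \<Rightarrow> real \<Rightarrow> 'a \<Rightarrow> 'a" where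
  "resolvent \<kappa> X g lam x = (THE y. y \<in> X \<and>
     (\<forall>z\<in>X. g y + ereal (Psi \<kappa> x y / lam) \<le> g z + ereal (Psi \<kappa> x z / lam)))"

end

theory Submission
  imports Defs
begin

text \<open>A resolvent step \<open>x' = J\<^sup>i\<^sub>\<lambda>(x)\<close> minimises \<open>f\<^sub>i + \<Psi>\<^sub>x / \<lambda>\<close>. Comparing \<open>x'\<close> with the points
  of the geodesic from \<open>x'\<close> to any \<open>y\<close>, bounding \<open>\<Psi>\<^sub>x\<close> there by the CAT(\<open>\<kappa>\<close>) comparison with
  the sphere and letting the geodesic parameter tend to \<open>0\<close> gives, with
  \<open>c = cos (\<surd>\<kappa> d(x', x))\<close>, the variational inequality
  \<open>\<kappa> d(x', y)\<^sup>2 \<le> \<kappa> d(x, y)\<^sup>2 - 2\<kappa>\<lambda> c / (1 + c\<^sup>2) (f\<^sub>i(x') - f\<^sub>i(y))\<close>.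
  The Lipschitz hypotheses make every step \<open>O(\<lambda>\<^sub>j)\<close> long, and \<open>1 - 2c / (1 + c\<^sup>2) = O(\<lambda>\<^sub>j\<^sup>2)\<close>;
  summing over a cycle with \<open>y\<close> a minimiser \<open>p\<close> gives a quasi-Fejer inequality for
  \<open>d(x\<^sub>j\<^sub>N, p)\<^sup>2\<close> with summable errors \<open>O(\<lambda>\<^sub>j\<^sup>2)\<close>. So these distances converge and
  \<open>\<Sum> \<lambda>\<^sub>j (f(x\<^sub>j\<^sub>N) - min f) < \<infinity>\<close>; as \<open>\<Sum> \<lambda>\<^sub>j = \<infinity>\<close>, along a subsequence \<open>f(x\<^sub>j\<^sub>N) \<rightarrow> min f\<close>,
  a cluster point \<open>q\<close> of it is a minimiser by lower semicontinuity, and the Fejer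
  property for \<open>p = q\<close> forces \<open>x\<^sub>n \<rightarrow> q\<close>.\<close>

section \<open>Spherical comparison\<close>

lemma inner_vector3: "(vector [a, b, c] :: real^3) \<bullet> vector [d, e, f] = a * d + b * e + c * f"
  by (simp add: inner_vec_def sum_3)

lemma unit_triangle_exists:
  fixes a b c :: real
  assumes "0 \<le> a" "0 \<le> b" "0 \<le> c" "a < pi/2" "b < pi/2" "c < pi/2"
    and "b \<le> a + c" "a \<le> b + c" "c \<le> a + b"
  shows "\<exists>U V W :: real^3. U \<bullet> U = 1 \<and> V \<bullet> V = 1 \<and> W \<bullet> W = 1 \<and>
     U \<bullet> V = cos a \<and> V \<bullet> W = cos b \<and> W \<bullet> U = cos c"
proof (cases "a = 0")
  case True
  then have "b = c" using assms by simp
  show ?thesis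
    by (rule exI[of _ "vector [1, 0, 0]"], rule exI[of _ "vector [1, 0, 0]"],
        rule exI[of _ "vector [cos c, sin c, 0]"]) (use True \<open>b = c\<close> in \<open>simp add: inner_vector3\<close>)
next
  case False
  then have sin_a: "sin a > 0" using assms by (intro sin_gt_zero) auto
  define y where "y = (cos b - cos a * cos c) / sin a"
  have "cos (a + c) \<le> cos b" "cos b \<le> cos \<bar>a - c\<bar>"
    using assms by (intro cos_monotone_0_pi_le; auto)+
  then have "\<bar>cos b - cos a * cos c\<bar> \<le> sin a * sin c"
    by (simp add: cos_add cos_diff abs_le_iff)
  then have "\<bar>y\<bar> \<le> sin c" using sin_a by (simp add: y_def abs_divide divide_le_eq mult.commute)
  moreover have "sin c \<ge> 0" using assms by (intro sin_ge_zero) auto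
  ultimately have y2: "y\<^sup>2 \<le> (sin c)\<^sup>2" by (metis abs_le_square_iff abs_of_nonneg)
  define z where "z = sqrt ((sin c)\<^sup>2 - y\<^sup>2)"
  have "z\<^sup>2 = (sin c)\<^sup>2 - y\<^sup>2" using y2 by (simp add: z_def)
  then have norm3: "y\<^sup>2 + (z\<^sup>2 + (cos c)\<^sup>2) = 1" using sin_cos_squared_add[of c] by linarith
  have angle: "cos a * cos c + sin a * y = cos b" using sin_a by (simp add: y_def field_simps)
  show ?thesis
    by (rule exI[of _ "vector [1, 0, 0]"], rule exI[of _ "vector [cos a, sin a, 0]"],
        rule exI[of _ "vector [cos c, y, z]"])
      (use angle norm3 in \<open>simp add: inner_vector3 power2_eq_square[symmetric] algebra_simps\<close>)
qed

definition sphere_arc :: "real^3 \<Rightarrow> real^3 \<Rightarrow> real \<Rightarrow> real \<Rightarrow> real^3" where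
  "sphere_arc U V a u = (sin (a - u) / sin a) *\<^sub>R U + (sin u / sin a) *\<^sub>R V"

lemma
  fixes U V :: "real^3"
  assumes U: "U \<bullet> U = 1" and V: "V \<bullet> V = 1" and UV: "U \<bullet> V = cos a" and sin_a: "sin a \<noteq> 0"
  shows sphere_arc_inner_left: "sphere_arc U V a u \<bullet> U = cos u"
    and sphere_arc_inner_right: "sphere_arc U V a u \<bullet> V = cos (a - u)"
    and sphere_arc_unit: "sphere_arc U V a u \<bullet> sphere_arc U V a u = 1"
proof -
  let ?Z = "sphere_arc U V a u"
  have VU: "V \<bullet> U = cos a" using UV by (simp add: inner_commute)
  show left: "?Z \<bullet> U = cos u"
    using U VU sin_a by (simp add: sphere_arc_def inner_add_left sin_diff field_simps)
  have "?Z \<bullet> V = (sin (a - u) * cos a + sin (a - (a - u))) / sin a"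
    using V UV sin_a by (simp add: sphere_arc_def inner_add_left field_simps)
  also have "\<dots> = cos (a - u)"
    using sin_a unfolding sin_diff[of a "a - u"] by (simp add: field_simps)
  finally show right: "?Z \<bullet> V = cos (a - u)" .
  have "?Z \<bullet> ?Z = (sin (a - u) * (?Z \<bullet> U) + sin u * (?Z \<bullet> V)) / sin a"
    by (simp add: sphere_arc_def inner_add_right add_divide_distrib)
  also have "sin (a - u) * (?Z \<bullet> U) + sin u * (?Z \<bullet> V) = sin a"
    using sin_add[of "a - u" u] by (simp add: left right mult.commute)
  finally show "?Z \<bullet> ?Z = 1" using sin_a by simp
qed

lemma unit_inner_bounds:
  fixes A B :: "real^3"
  assumes "A \<bullet> A = 1" "B \<bullet> B = 1"
  shows "-1 \<le> A \<bullet> B" "A \<bullet> B \<le> 1"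
proof -
  have "norm A = 1" "norm B = 1" using assms by (simp_all add: norm_eq_sqrt_inner)
  with Cauchy_Schwarz_ineq2[of A B] show "-1 \<le> A \<bullet> B" "A \<bullet> B \<le> 1" by auto
qed

definition to_model_sphere :: "real \<Rightarrow> real^3 \<Rightarrow> real^3" where
  "to_model_sphere \<kappa> U = (1 / sqrt \<kappa>) *\<^sub>R U"

lemma sdist_to_model_sphere:
  assumes "\<kappa> > 0"
  shows "sdist \<kappa> (to_model_sphere \<kappa> A) (to_model_sphere \<kappa> B) = arccos (A \<bullet> B) / sqrt \<kappa>"
  using assms by (simp add: sdist_def to_model_sphere_def real_sqrt_mult[symmetric])

lemma to_model_sphere_in_model_sphere:
  assumes "\<kappa> > 0" "A \<bullet> A = 1"
  shows "to_model_sphere \<kappa> A \<in> model_sphere \<kappa>"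
  using assms by (simp add: to_model_sphere_def model_sphere_def norm_eq_sqrt_inner real_sqrt_divide)

lemma on_model_seg_sphere_arc:
  fixes U V :: "real^3"
  assumes \<kappa>: "\<kappa> > 0" and U: "U \<bullet> U = 1" and V: "V \<bullet> V = 1" and UV: "U \<bullet> V = cos a"
    and a: "0 < a" "a < pi/2" and u: "0 \<le> u" "u \<le> a"
  shows "on_model_seg \<kappa> (to_model_sphere \<kappa> U) (to_model_sphere \<kappa> V) (u / sqrt \<kappa>)
           (to_model_sphere \<kappa> (sphere_arc U V a u))"
proof -
  have sin_a: "sin a \<noteq> 0" using a by (simp add: sin_gt_zero less_imp_neq[symmetric])
  note sd = sdist_to_model_sphere[OF \<kappa>]
  have "sdist \<kappa> (to_model_sphere \<kappa> U) (to_model_sphere \<kappa> V) = a / sqrt \<kappa>"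
    using a by (simp add: sd UV arccos_cos)
  moreover have "sdist \<kappa> (to_model_sphere \<kappa> U) (to_model_sphere \<kappa> (sphere_arc U V a u)) = u / sqrt \<kappa>"
    using u a by (simp add: sd inner_commute[of U] sphere_arc_inner_left[OF U V UV sin_a] arccos_cos)
  moreover have "sdist \<kappa> (to_model_sphere \<kappa> (sphere_arc U V a u)) (to_model_sphere \<kappa> V) = (a - u) / sqrt \<kappa>"
    using u a by (simp add: sd sphere_arc_inner_right[OF U V UV sin_a] arccos_cos)
  ultimately show ?thesis
    using to_model_sphere_in_model_sphere[OF \<kappa> sphere_arc_unit[OF U V UV sin_a]]
    by (simp add: on_model_seg_def diff_divide_distrib)
qed

lemma comparison_triangle_exists:
  fixes p q r :: "'a::metric_space"
  assumes \<kappa>: "\<kappa> > 0"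
    and pq: "sqrt \<kappa> * dist p q < pi/2" and qr: "sqrt \<kappa> * dist q r < pi/2"
    and rp: "sqrt \<kappa> * dist r p < pi/2"
  obtains U V W :: "real^3" where "U \<bullet> U = 1" "V \<bullet> V = 1" "W \<bullet> W = 1"
    "U \<bullet> V = cos (sqrt \<kappa> * dist p q)" "V \<bullet> W = cos (sqrt \<kappa> * dist q r)"
    "W \<bullet> U = cos (sqrt \<kappa> * dist r p)"
    "comparison_triangle \<kappa> p q r (to_model_sphere \<kappa> U) (to_model_sphere \<kappa> V) (to_model_sphere \<kappa> W)"
proof -
  have triangle: "sqrt \<kappa> * dist q r \<le> sqrt \<kappa> * dist p q + sqrt \<kappa> * dist r p"
    "sqrt \<kappa> * dist p q \<le> sqrt \<kappa> * dist q r + sqrt \<kappa> * dist r p"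
    "sqrt \<kappa> * dist r p \<le> sqrt \<kappa> * dist p q + sqrt \<kappa> * dist q r"
    using dist_triangle[of r p q] dist_triangle[of p q r] dist_triangle[of q r p]
    using \<kappa> by (auto simp: distrib_left[symmetric] dist_commute add_ac intro!: mult_left_mono)
  obtain U V W :: "real^3" where UVW: "U \<bullet> U = 1" "V \<bullet> V = 1" "W \<bullet> W = 1"
    "U \<bullet> V = cos (sqrt \<kappa> * dist p q)" "V \<bullet> W = cos (sqrt \<kappa> * dist q r)"
    "W \<bullet> U = cos (sqrt \<kappa> * dist r p)"
    using unit_triangle_exists[OF _ _ _ pq qr rp triangle] \<kappa> by auto
  have side: "arccos (cos (sqrt \<kappa> * dist v w)) / sqrt \<kappa> = dist v w"
    if "sqrt \<kappa> * dist v w < pi/2" for v w :: 'a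
  proof -
    have "0 \<le> sqrt \<kappa> * dist v w" using \<kappa> by simp
    then have "arccos (cos (sqrt \<kappa> * dist v w)) = sqrt \<kappa> * dist v w"
      using that pi_gt_zero by (intro arccos_cos) linarith+
    then show ?thesis using \<kappa> by simp
  qed
  have "comparison_triangle \<kappa> p q r (to_model_sphere \<kappa> U) (to_model_sphere \<kappa> V) (to_model_sphere \<kappa> W)"
    using UVW side[OF pq] side[OF qr] side[OF rp] \<kappa>
    by (simp add: comparison_triangle_def to_model_sphere_in_model_sphere sdist_to_model_sphere)
  with UVW show ?thesis by (rule that)
qed

lemma CAT_geodesic_exists:
  assumes "\<kappa> > 0" "CAT_space \<kappa> X" "v \<in> X" "w \<in> X" "sqrt \<kappa> * dist v w < pi"
  shows "\<exists>\<gamma>. geodesic_in X v w \<gamma>"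
proof -
  have "dist v w < pi / sqrt \<kappa>" using assms(1,5) by (simp add: field_simps)
  then show ?thesis using assms(2-4) unfolding CAT_space_def by blast
qed

lemma CAT_dist_le_sdist:
  assumes \<kappa>: "\<kappa> > 0" and cat: "CAT_space \<kappa> X" and X: "x \<in> X" "y \<in> X" "z \<in> X"
    and geo: "geodesic_in X y z \<gamma>" "geodesic_in X z x g2" "geodesic_in X x y g3"
    and perimeter: "dist y z + dist z x + dist x y < 2 * pi / sqrt \<kappa>"
    and tri: "comparison_triangle \<kappa> y z x P Q R"
    and Z: "on_model_seg \<kappa> P Q s Z" and s: "0 \<le> s" "s \<le> dist y z"
  shows "dist (\<gamma> s) x \<le> sdist \<kappa> Z R"
proof -
  have "side_cmp \<kappa> y z \<gamma> P Q z x g2 Q R"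
    using cat X geo perimeter tri unfolding CAT_space_def by blast
  moreover have "sdist \<kappa> R R = 0" using tri \<kappa>
    by (simp add: comparison_triangle_def model_sphere_def sdist_def dot_square_norm
        power_divide real_sqrt_pow2)
  then have "on_model_seg \<kappa> Q R (dist z x) R"
    using tri by (simp add: on_model_seg_def comparison_triangle_def)
  moreover have "g2 (dist z x) = x" using geo(2) by (simp add: geodesic_in_def)
  ultimately show ?thesis using Z s unfolding side_cmp_def by fastforce
qed

lemma le_cos_if_le_arccos:
  fixes y t :: real
  assumes "-1 \<le> y" "y \<le> 1" "0 \<le> t" "t \<le> arccos y"
  shows "y \<le> cos t"
proof -
  have "y = cos (arccos y)" using assms(1,2) by simp
  also have "\<dots> \<le> cos t" using assms arccos_bounded[of y] by (intro cos_monotone_0_pi_le) auto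
  finally show ?thesis .
qed

text \<open>The CAT(\<open>\<kappa>\<close>) inequality between \<open>\<gamma> s\<close> on the side \<open>[y, z]\<close> and the vertex \<open>x\<close>,
  with the spherical distance of the comparison points written out via \<open>sphere_arc\<close>.\<close>

lemma CAT_cos_comparison:
  fixes X :: "'a::metric_space set"
  assumes \<kappa>: "\<kappa> > 0" and cat: "CAT_space \<kappa> X"
    and X: "x \<in> X" "y \<in> X" "z \<in> X"
    and yz: "sqrt \<kappa> * dist y z < pi/2" and zx: "sqrt \<kappa> * dist z x < pi/2"
    and xy: "sqrt \<kappa> * dist x y < pi/2"
    and \<gamma>: "geodesic_in X y z \<gamma>" and s: "0 \<le> s" "s \<le> dist y z"
  shows "cos (sqrt \<kappa> * dist y x) * sin (sqrt \<kappa> * dist y z - sqrt \<kappa> * s)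
       + cos (sqrt \<kappa> * dist z x) * sin (sqrt \<kappa> * s)
       \<le> cos (sqrt \<kappa> * dist (\<gamma> s) x) * sin (sqrt \<kappa> * dist y z)"
proof (cases "y = z")
  case True
  then show ?thesis using s by simp
next
  case False
  define K where "K = sqrt \<kappa>"
  have K: "K > 0" using \<kappa> by (simp add: K_def)
  have "sqrt \<kappa> * dist z x < pi" "sqrt \<kappa> * dist x y < pi" using zx xy pi_gt_zero by linarith+
  then obtain g2 g3 where g2: "geodesic_in X z x g2" and g3: "geodesic_in X x y g3"
    using CAT_geodesic_exists[OF \<kappa> cat X(3,1)] CAT_geodesic_exists[OF \<kappa> cat X(1,2)] by blast
  obtain U V W where UVW: "U \<bullet> U = 1" "V \<bullet> V = 1" "W \<bullet> W = 1"
    "U \<bullet> V = cos (K * dist y z)" "V \<bullet> W = cos (K * dist z x)" "W \<bullet> U = cos (K * dist x y)"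
    and tri: "comparison_triangle \<kappa> y z x (to_model_sphere \<kappa> U) (to_model_sphere \<kappa> V) (to_model_sphere \<kappa> W)"
    using comparison_triangle_exists[OF \<kappa> yz zx xy] unfolding K_def by blast
  have "K * (dist y z + dist z x + dist x y) < 2 * pi"
    using yz zx xy pi_gt_zero unfolding K_def distrib_left by linarith
  then have perimeter: "dist y z + dist z x + dist x y < 2 * pi / K"
    using K by (simp add: field_simps)
  define a where "a = K * dist y z"
  define Z where "Z = sphere_arc U V a (K * s)"
  have "on_model_seg \<kappa> (to_model_sphere \<kappa> U) (to_model_sphere \<kappa> V) s (to_model_sphere \<kappa> Z)"
    using on_model_seg_sphere_arc[OF \<kappa> UVW(1,2), of a "K * s"] UVW(4) False K s yz
    by (simp add: Z_def a_def K_def)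
  from CAT_dist_le_sdist[OF \<kappa> cat X \<gamma> g2 g3 _ tri this s] perimeter
  have "dist (\<gamma> s) x \<le> sdist \<kappa> (to_model_sphere \<kappa> Z) (to_model_sphere \<kappa> W)"
    by (simp add: K_def)
  then have "K * dist (\<gamma> s) x \<le> arccos (Z \<bullet> W)"
    using \<kappa> K by (simp add: sdist_to_model_sphere K_def field_simps)
  have a: "0 < a" "a < pi/2" using False K yz by (simp_all add: a_def K_def)
  then have sin_a: "sin a > 0" by (intro sin_gt_zero) auto
  have Z_unit: "Z \<bullet> Z = 1" using sphere_arc_unit[OF UVW(1,2,4)] sin_a by (simp add: Z_def a_def)
  have "Z \<bullet> W \<le> cos (K * dist (\<gamma> s) x)"
    using unit_inner_bounds[OF Z_unit UVW(3)] \<open>K * dist (\<gamma> s) x \<le> arccos (Z \<bullet> W)\<close> K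
    by (intro le_cos_if_le_arccos) auto
  moreover have "Z \<bullet> W = (sin (a - K * s) * cos (K * dist x y) + sin (K * s) * cos (K * dist z x)) / sin a"
    using UVW by (simp add: Z_def sphere_arc_def inner_add_left inner_commute[of U W] add_divide_distrib)
  ultimately show ?thesis using sin_a
    by (simp add: divide_le_eq a_def K_def dist_commute[of x y] mult.commute right_diff_distrib[symmetric])
qed

section \<open>Real inequalities\<close>

lemma x_cos_le_sin:
  fixes s :: real
  assumes "0 \<le> s" "s \<le> pi/2"
  shows "s * cos s \<le> sin s"
proof -
  have "s * cos s - sin s \<le> 0 * cos 0 - sin 0"
  proof (rule deriv_nonpos_imp_antimono[where g = "\<lambda>x. x * cos x - sin x" and g' = "\<lambda>x. - x * sin x"])
    fix x assume x: "x \<in> {0..s}"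
    show "((\<lambda>x. x * cos x - sin x) has_real_derivative - x * sin x) (at x)"
      by (auto intro!: derivative_eq_intros)
    have "sin x \<ge> 0" using x assms by (intro sin_ge_zero) auto
    then show "- x * sin x \<le> 0" using x by auto
  qed (use assms in auto)
  then show ?thesis by simp
qed

lemma sin_div_self_antimono:
  fixes s t :: real
  assumes "0 < t" "t \<le> s" "s \<le> pi/2"
  shows "sin s / s \<le> sin t / t"
proof (rule deriv_nonpos_imp_antimono[where g = "\<lambda>x. sin x / x" and g' = "\<lambda>x. (x * cos x - sin x) / x\<^sup>2"])
  fix x assume x: "x \<in> {t..s}"
  then have "x > 0" using assms by auto
  then show "((\<lambda>x. sin x / x) has_real_derivative (x * cos x - sin x) / x\<^sup>2) (at x)"
    by (auto intro!: derivative_eq_intros simp: power2_eq_square field_simps)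
  have "x * cos x \<le> sin x" using x assms by (intro x_cos_le_sin) auto
  then show "(x * cos x - sin x) / x\<^sup>2 \<le> 0" by (intro divide_nonpos_nonneg) auto
qed (use assms in auto)

text \<open>Comparison of \<open>cos\<close> with the parabola through \<open>(\<theta>, cos \<theta>)\<close> of curvature \<open>sin \<theta> / \<theta>\<close>:
  \<open>x \<mapsto> cos x + (sin \<theta> / \<theta>) x\<^sup>2 / 2\<close> is minimal at \<open>\<theta>\<close> on \<open>[0, \<pi>/2]\<close>.\<close>

lemma cos_diff_le_sq_diff:
  fixes \<theta> \<phi> :: real
  assumes "0 < \<theta>" "\<theta> \<le> pi/2" "0 \<le> \<phi>" "\<phi> \<le> pi/2"
  shows "(cos \<theta> - cos \<phi>) * \<theta> \<le> (\<phi>\<^sup>2 - \<theta>\<^sup>2) / 2 * sin \<theta>"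
proof -
  define k where "k = sin \<theta> / \<theta>"
  define G where "G x = cos x + k * x\<^sup>2 / 2" for x
  have dG: "(G has_real_derivative (- sin x + k * x)) (at x)" for x
    unfolding G_def by (auto intro!: derivative_eq_intros simp: power2_eq_square)
  have "G \<theta> \<le> G \<phi>"
  proof (cases "\<theta> \<le> \<phi>")
    case True
    show ?thesis
    proof (rule DERIV_nonneg_imp_nondecreasing[OF True])
      fix x assume x: "\<theta> \<le> x" "x \<le> \<phi>"
      have "sin x / x \<le> k" unfolding k_def using x assms by (intro sin_div_self_antimono) auto
      then have "sin x \<le> k * x" using x assms by (simp add: field_simps)
      then show "\<exists>y. (G has_real_derivative y) (at x) \<and> 0 \<le> y"
        using dG[of x] by (intro exI[of _ "- sin x + k * x"]) auto
    qed
  next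
    case False
    show ?thesis
    proof (rule deriv_nonpos_imp_antimono[where g = G and g' = "\<lambda>x. - sin x + k * x"])
      fix x assume x: "x \<in> {\<phi>..\<theta>}"
      show "(G has_real_derivative - sin x + k * x) (at x)" by (rule dG)
      show "- sin x + k * x \<le> 0"
      proof (cases "x = 0")
        case False
        then have "k \<le> sin x / x" unfolding k_def using x assms by (intro sin_div_self_antimono) auto
        then show ?thesis using x assms False by (simp add: field_simps)
      qed simp
    qed (use False in auto)
  qed
  then have "cos \<theta> - cos \<phi> \<le> k * (\<phi>\<^sup>2 - \<theta>\<^sup>2) / 2" by (simp add: G_def field_simps)
  then have "(cos \<theta> - cos \<phi>) * \<theta> \<le> k * (\<phi>\<^sup>2 - \<theta>\<^sup>2) / 2 * \<theta>"
    using assms by (intro mult_right_mono) auto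
  also have "\<dots> = (\<phi>\<^sup>2 - \<theta>\<^sup>2) / 2 * sin \<theta>" using assms by (simp add: k_def field_simps)
  finally show ?thesis .
qed

lemma one_minus_cos_le:
  fixes D :: real
  assumes "0 \<le> D"
  shows "1 - cos D \<le> D"
proof -
  have "0 - 1 + cos 0 \<le> D - 1 + cos D"
  proof (rule DERIV_nonneg_imp_nondecreasing[OF assms])
    fix t :: real
    have "((\<lambda>t. t - 1 + cos t) has_real_derivative 1 - sin t) (at t)"
      by (auto intro!: derivative_eq_intros)
    then show "\<exists>y. ((\<lambda>t. t - 1 + cos t) has_real_derivative y) (at t) \<and> 0 \<le> y" by force
  qed
  then show ?thesis by simp
qed

lemma slope_le_derivative:
  fixes F :: "real \<Rightarrow> real"
  assumes F: "(F has_real_derivative D) (at 0)"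
    and slope: "\<And>t. 0 < t \<Longrightarrow> t \<le> 1 \<Longrightarrow> t * A \<le> F t - F 0"
  shows "A \<le> D"
proof (rule tendsto_lowerbound)
  show "((\<lambda>t. (F t - F 0) / t) \<longlongrightarrow> D) (at_right 0)"
    using F by (simp add: DERIV_def filterlim_at_split)
  have "eventually (\<lambda>t. 0 < t \<and> t < 1) (at_right (0::real))"
    by (auto simp: eventually_at_right_field intro!: exI[of _ 1])
  then show "eventually (\<lambda>t. A \<le> (F t - F 0) / t) (at_right 0)"
    by eventually_elim (use slope in \<open>auto simp: field_simps\<close>)
qed simp

text \<open>\<open>\<Psi>\<^sub>x(y) = \<phi>(cos (\<surd>\<kappa> d(y, x))) / \<kappa>\<close>.\<close>

definition phi :: "real \<Rightarrow> real" where
  "phi c = 1 / c - c"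

lemma phi_antimono: "0 < a \<Longrightarrow> a \<le> b \<Longrightarrow> phi b \<le> phi a"
  unfolding phi_def using divide_left_mono[of a b 1] by (simp add: mult_pos_pos)

lemma phi_strict_antimono: "0 < a \<Longrightarrow> a < b \<Longrightarrow> phi b < phi a"
  unfolding phi_def using divide_strict_left_mono[of a b 1] by (simp add: mult_pos_pos)

lemma one_minus_sq_le_phi:
  assumes "0 < c" "c \<le> 1"
  shows "1 - c\<^sup>2 \<le> phi c"
proof -
  have "(1 - c\<^sup>2) * c \<le> 1 - c\<^sup>2" using assms by (intro mult_left_le) (auto simp: power_le_one)
  then show ?thesis using assms by (simp add: phi_def field_simps power2_eq_square)
qed

lemma phi_nonneg: "0 < c \<Longrightarrow> c \<le> 1 \<Longrightarrow> 0 \<le> phi c"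
  using one_minus_sq_le_phi[of c] power_le_one[of c 2] by simp

lemma phi_midpoint_convex:
  assumes "0 < a" "0 < b"
  shows "phi ((a + b) / 2) \<le> (phi a + phi b) / 2"
proof -
  have "4 * a * b \<le> (a + b)\<^sup>2" using sum_squares_ge_zero[of "a - b" 0]
    by (simp add: power2_eq_square algebra_simps)
  then have "2 / (a + b) \<le> (1 / a + 1 / b) / 2" using assms
    by (simp add: field_simps power2_eq_square)
  moreover have "1 / ((a + b) / 2) = 2 / (a + b)" by simp
  ultimately show ?thesis by (simp add: phi_def add_divide_distrib diff_divide_distrib)
qed

lemma twice_cos_ratio_defect_le:
  fixes D :: real
  assumes "0 \<le> D"
  shows "1 - 2 * (cos D / (1 + (cos D)\<^sup>2)) \<le> D\<^sup>2"
proof -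
  have pos: "1 + (cos D)\<^sup>2 > 0" by (simp add: add_pos_nonneg)
  have "1 - 2 * (cos D / (1 + (cos D)\<^sup>2)) = (1 - cos D)\<^sup>2 / (1 + (cos D)\<^sup>2)"
    using pos by (simp add: field_simps power2_eq_square)
  also have "\<dots> \<le> (1 - cos D)\<^sup>2" using pos by (simp add: divide_le_eq mult_le_cancel_left1)
  also have "\<dots> \<le> D\<^sup>2" using one_minus_cos_le[OF assms] by (intro power_mono) auto
  finally show ?thesis .
qed

lemma twice_ratio_le_one: "2 * ((c::real) / (1 + c\<^sup>2)) \<le> 1"
proof -
  have "2 * c \<le> 1 + c\<^sup>2" using sum_squares_ge_zero[of "1 - c" 0]
    by (simp add: power2_eq_square algebra_simps)
  then show ?thesis by (simp add: add_pos_nonneg divide_le_eq)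
qed

lemma descent_error_bound:
  fixes \<rho> a D B M :: real
  assumes "1 - 2 * \<rho> \<le> D\<^sup>2" "2 * \<rho> \<le> 1" "0 \<le> D" "D \<le> B" "a \<le> M" "0 \<le> M"
  shows "(1 - 2 * \<rho>) * a \<le> B\<^sup>2 * M"
proof (cases "a \<le> 0")
  case True
  then have "(1 - 2 * \<rho>) * a \<le> 0" using assms(2) by (simp add: mult_nonneg_nonpos)
  also have "0 \<le> B\<^sup>2 * M" using assms(6) by simp
  finally show ?thesis .
next
  case False
  have "(1 - 2 * \<rho>) * a \<le> D\<^sup>2 * M" using False assms by (intro mult_mono) auto
  also have "\<dots> \<le> B\<^sup>2 * M" using False assms by (intro mult_right_mono power_mono) auto
  finally show ?thesis .
qed

lemma slope_bound_to_sq_dist: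
  fixes c cy \<theta> \<phi> A :: real
  assumes c: "0 < c" "c \<le> 1" and cy: "0 < cy" and \<theta>: "0 < \<theta>" "\<theta> < pi/2"
    and \<phi>: "0 \<le> \<phi>" "\<phi> \<le> pi/2" "cos \<phi> = cy"
    and A: "A \<le> (1 / c\<^sup>2 + 1) * (c * cos \<theta> - cy) * \<theta> / sin \<theta>"
  shows "2 * (c / (1 + c\<^sup>2)) * A \<le> \<phi>\<^sup>2 - \<theta>\<^sup>2"
proof -
  have sin_\<theta>: "sin \<theta> > 0" using \<theta> by (intro sin_gt_zero) auto
  define w where "w = c / (1 + c\<^sup>2)"
  have "1 + c\<^sup>2 \<noteq> 0" using zero_le_power2[of c] by linarith
  then have "w * (1 / c\<^sup>2 + 1) = w * ((1 + c\<^sup>2) / c\<^sup>2)"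
    using c by (simp add: field_simps)
  also have "\<dots> = 1 / c" using c \<open>1 + c\<^sup>2 \<noteq> 0\<close> by (simp add: w_def power2_eq_square)
  finally have weight: "w * (1 / c\<^sup>2 + 1) = 1 / c" .
  have "w * A \<le> w * ((1 / c\<^sup>2 + 1) * (c * cos \<theta> - cy) * \<theta> / sin \<theta>)"
    using A c by (intro mult_left_mono) (auto simp: w_def intro: add_pos_nonneg)
  also have "\<dots> = (w * (1 / c\<^sup>2 + 1)) * (c * cos \<theta> - cy) * \<theta> / sin \<theta>"
    by (simp add: algebra_simps)
  also have "\<dots> = 1 / c * (c * cos \<theta> - cy) * \<theta> / sin \<theta>"
    by (simp only: weight)
  also have "\<dots> = (cos \<theta> - cy / c) * \<theta> / sin \<theta>"
    using c by (simp add: field_simps)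
  also have "\<dots> \<le> (cos \<theta> - cy) * \<theta> / sin \<theta>"
  proof -
    have "cy \<le> cy / c" using c cy by (simp add: le_divide_eq)
    then show ?thesis using \<theta> sin_\<theta> by (intro divide_right_mono mult_right_mono) auto
  qed
  also have "\<dots> \<le> (\<phi>\<^sup>2 - \<theta>\<^sup>2) / 2"
    using cos_diff_le_sq_diff[of \<theta> \<phi>] \<theta> \<phi> sin_\<theta> by (simp add: divide_le_eq)
  finally show ?thesis by (simp add: w_def mult.commute)
qed

lemma phi_arc_has_derivative:
  fixes c cy \<theta> :: real
  assumes "0 < c" "sin \<theta> \<noteq> 0"
  shows "((\<lambda>t. phi ((c * sin ((1 - t) * \<theta>) + cy * sin (t * \<theta>)) / sin \<theta>))
    has_real_derivative (1 / c\<^sup>2 + 1) * (c * cos \<theta> - cy) * \<theta> / sin \<theta>) (at 0)"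
proof -
  define m where "m t = (c * sin ((1 - t) * \<theta>) + cy * sin (t * \<theta>)) / sin \<theta>" for t
  define m' where "m' = (- c * cos \<theta> * \<theta> + cy * \<theta>) / sin \<theta>"
  have "(m has_real_derivative m') (at 0)"
    unfolding m_def m'_def using assms(2) by (auto intro!: derivative_eq_intros)
  moreover have "m 0 = c" using assms(2) by (simp add: m_def)
  ultimately have "((\<lambda>t. phi (m t)) has_real_derivative - m' / c\<^sup>2 - m') (at 0)"
    unfolding phi_def using assms(1) by (auto intro!: derivative_eq_intros simp: power2_eq_square)
  moreover have "- m' / c\<^sup>2 - m' = (1 / c\<^sup>2 + 1) * (c * cos \<theta> - cy) * \<theta> / sin \<theta>"
    using assms by (simp add: m'_def field_simps power2_eq_square)
  ultimately show ?thesis by (simp add: m_def)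
qed

section \<open>Sequences\<close>

lemma quasi_fejer_convergent:
  fixes V w b :: "nat \<Rightarrow> real"
  assumes V: "\<And>j. 0 \<le> V j" and w: "\<And>j. 0 \<le> w j" and b: "\<And>j. 0 \<le> b j" "summable b"
    and step: "\<And>j. V (Suc j) \<le> V j - w j + b j"
  shows "convergent V" "summable w"
proof -
  have partial: "V n + (\<Sum>j<n. w j) \<le> V 0 + (\<Sum>j<n. b j)" for n
  proof (induction n)
    case (Suc n)
    then show ?case using step[of n] by simp
  qed simp
  have b_le: "(\<Sum>j<n. b j) \<le> suminf b" for n using b by (intro sum_le_suminf) auto
  show "summable w"
  proof (rule summableI_nonneg_bounded[where x = "V 0 + suminf b"])
    show "(\<Sum>j<n. w j) \<le> V 0 + suminf b" for n using partial[of n] b_le[of n] V[of n] by linarith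
  qed (rule w)
  define S where "S n = V n + (\<Sum>j<n. w j - b j)" for n
  have "S (Suc n) \<le> S n" for n using step[of n] by (simp add: S_def)
  then have "decseq S" by (rule decseq_SucI)
  moreover have "- suminf b \<le> S n" for n
    using b_le[of n] V[of n] sum_nonneg[of "{..<n}" w] w by (simp add: S_def sum_subtractf)
  ultimately have "convergent S"
    by (intro Bseq_monoseq_convergent decseq_bounded monoseq_iff[THEN iffD2]) auto
  moreover have "convergent (\<lambda>n. \<Sum>j<n. w j - b j)"
    using summable_diff[OF \<open>summable w\<close> b(2)] by (simp add: summable_iff_convergent)
  ultimately have "convergent (\<lambda>n. S n - (\<Sum>j<n. w j - b j))" by (rule convergent_diff)
  then show "convergent V" by (simp add: S_def)
qed

lemma subseq_tendsto_zero_if_weighted_summable: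
  fixes lam u :: "nat \<Rightarrow> real"
  assumes summable: "summable (\<lambda>j. lam j * u j)" and u: "\<And>j. 0 \<le> u j"
    and lam: "\<And>j. 0 < lam j" "\<not> summable lam"
  obtains r where "strict_mono r" "(u \<circ> r) \<longlonglongrightarrow> 0"
proof -
  have "liminf (\<lambda>j. ereal (u j)) \<le> 0"
  proof (rule ccontr)
    assume "\<not> ?thesis"
    then obtain e where e: "0 < ereal e" "ereal e < liminf (\<lambda>j. ereal (u j))"
      using ereal_dense2[of 0 "liminf (\<lambda>j. ereal (u j))"] by (auto simp: not_le)
    then obtain J where J: "\<And>j. j \<ge> J \<Longrightarrow> e < u j"
      using liminf_bounded_iff[of "liminf (\<lambda>j. ereal (u j))" "\<lambda>j. ereal (u j)"] by force
    have "summable (\<lambda>j. lam j * u j / e)" using summable by (rule summable_divide)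
    moreover have "norm (lam j) \<le> lam j * u j / e" if "j \<ge> J" for j
      using J[OF that] lam(1)[of j] e(1) mult_left_mono[of e "u j" "lam j"] by (simp add: field_simps)
    ultimately have "summable lam" by (rule summable_comparison_test')
    with lam(2) show False ..
  qed
  moreover have "0 \<le> liminf (\<lambda>j. ereal (u j))" using u by (intro Liminf_bounded) auto
  ultimately have "liminf (\<lambda>j. ereal (u j)) = 0" by simp
  then obtain r where "strict_mono r" "((\<lambda>j. ereal (u j)) \<circ> r) \<longlonglongrightarrow> 0"
    using liminf_subseq_lim[of "\<lambda>j. ereal (u j)"] by auto
  then show ?thesis using that by (simp add: o_def zero_ereal_def)
qed

lemma sum_liminf_le_liminf_sum:
  fixes u :: "'i \<Rightarrow> nat \<Rightarrow> ereal"
  assumes "finite I" "\<And>i. i \<in> I \<Longrightarrow> liminf (u i) \<noteq> -\<infinity>"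
  shows "(\<Sum>i\<in>I. liminf (u i)) \<le> liminf (\<lambda>n. \<Sum>i\<in>I. u i n)"
proof -
  have "(\<Sum>i\<in>I. liminf (u i)) \<noteq> -\<infinity> \<and> (\<Sum>i\<in>I. liminf (u i)) \<le> liminf (\<lambda>n. \<Sum>i\<in>I. u i n)"
    using assms
  proof (induction I rule: finite_induct)
    case (insert i I)
    then have IH: "(\<Sum>i\<in>I. liminf (u i)) \<noteq> -\<infinity>" "(\<Sum>i\<in>I. liminf (u i)) \<le> liminf (\<lambda>n. \<Sum>i\<in>I. u i n)"
      and ui: "liminf (u i) \<noteq> -\<infinity>" by auto
    have "liminf (u i) + (\<Sum>i\<in>I. liminf (u i)) \<le> liminf (u i) + liminf (\<lambda>n. \<Sum>i\<in>I. u i n)"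
      using IH(2) by (rule add_left_mono)
    also have "\<dots> \<le> liminf (\<lambda>n. u i n + (\<Sum>i\<in>I. u i n))"
      using IH ui by (intro ereal_liminf_add_mono) auto
    finally show ?case using insert(1,2) IH(1) ui by simp
  qed (simp add: Liminf_const)
  then show ?thesis ..
qed

lemma lsc_on_sum:
  assumes "finite I" "\<forall>i\<in>I. lsc_on X (g i)" "\<forall>i\<in>I. \<forall>y\<in>X. g i y \<noteq> -\<infinity>"
  shows "lsc_on X (\<lambda>y. \<Sum>i\<in>I. g i y)"
  unfolding lsc_on_def
proof (intro ballI allI impI)
  fix p u assume p: "p \<in> X" and u: "(\<forall>n. u n \<in> X) \<and> u \<longlonglongrightarrow> p"
  have le: "g i p \<le> liminf (\<lambda>n. g i (u n))" if "i \<in> I" for i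
    using assms(2) that p u unfolding lsc_on_def by blast
  have "(\<Sum>i\<in>I. g i p) \<le> (\<Sum>i\<in>I. liminf (\<lambda>n. g i (u n)))" using le by (rule sum_mono)
  also have "\<dots> \<le> liminf (\<lambda>n. \<Sum>i\<in>I. g i (u n))"
    using le assms(3) p by (intro sum_liminf_le_liminf_sum[OF assms(1)]) force
  finally show "(\<Sum>i\<in>I. g i p) \<le> liminf (\<lambda>n. \<Sum>i\<in>I. g i (u n))" .
qed

section \<open>Proximal points in a small CAT(\<open>\<kappa>\<close>) space\<close>

lemma geodesic_in_mem:
  assumes "geodesic_in X a b \<gamma>" "0 \<le> s" "s \<le> dist a b"
  shows "\<gamma> s \<in> X"
  using assms unfolding geodesic_in_def by auto

lemma Psi_eq_phi: "Psi \<kappa> x y = phi (cos (sqrt \<kappa> * dist y x)) / \<kappa>"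
  unfolding Psi_def phi_def by (simp add: diff_divide_distrib)

lemma Psi_self: "Psi \<kappa> x x = 0"
  by (simp add: Psi_eq_phi phi_def)

locale small_CAT_space =
  fixes \<kappa> :: real and X :: "'a::metric_space set"
  assumes kappa_pos: "\<kappa> > 0" and compact_X: "compact X" and CAT: "CAT_space \<kappa> X"
    and small: "\<forall>v\<in>X. \<forall>w\<in>X. dist v w < pi / (2 * sqrt \<kappa>)"
begin

lemma sqrt_kappa_pos: "sqrt \<kappa> > 0"
  using kappa_pos by simp

lemma scaled_dist_less: "v \<in> X \<Longrightarrow> w \<in> X \<Longrightarrow> sqrt \<kappa> * dist v w < pi/2"
  using small sqrt_kappa_pos by (simp add: field_simps)

lemma scaled_dist_nonneg: "0 \<le> sqrt \<kappa> * dist v w"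
  using sqrt_kappa_pos by simp

lemma cos_dist_pos: "v \<in> X \<Longrightarrow> w \<in> X \<Longrightarrow> 0 < cos (sqrt \<kappa> * dist v w)"
  using scaled_dist_less[of v w] scaled_dist_nonneg[of v w] pi_gt_zero
  by (intro cos_gt_zero_pi) linarith+

lemma geodesic_exists:
  assumes "v \<in> X" "w \<in> X"
  shows "\<exists>\<gamma>. geodesic_in X v w \<gamma>"
proof (rule CAT_geodesic_exists[OF kappa_pos CAT assms])
  show "sqrt \<kappa> * dist v w < pi" using scaled_dist_less[OF assms] pi_gt_zero by linarith
qed

lemma cos_comparison:
  assumes "x \<in> X" "y \<in> X" "z \<in> X" "geodesic_in X y z \<gamma>" "0 \<le> s" "s \<le> dist y z"
  shows "cos (sqrt \<kappa> * dist y x) * sin (sqrt \<kappa> * dist y z - sqrt \<kappa> * s)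
       + cos (sqrt \<kappa> * dist z x) * sin (sqrt \<kappa> * s)
       \<le> cos (sqrt \<kappa> * dist (\<gamma> s) x) * sin (sqrt \<kappa> * dist y z)"
  using assms scaled_dist_less[of y z] scaled_dist_less[of z x] scaled_dist_less[of x y]
  by (intro CAT_cos_comparison[OF kappa_pos CAT]) auto

definition cos_diam :: real where
  "cos_diam = cos (sqrt \<kappa> * diameter X)"

lemma cos_diam_pos: "0 < cos_diam"
proof (cases "X = {}")
  case False
  then obtain v w where "v \<in> X" "w \<in> X" "dist v w = diameter X"
    using diameter_compact_attained[OF compact_X] by blast
  then show ?thesis
    using cos_dist_pos by (metis cos_diam_def)
qed (unfold cos_diam_def, simp)

lemma cos_diam_le:
  assumes "v \<in> X" "w \<in> X"
  shows "cos_diam \<le> cos (sqrt \<kappa> * dist v w)"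
proof -
  obtain p q where "p \<in> X" "q \<in> X" "dist p q = diameter X"
    using diameter_compact_attained[OF compact_X] assms by blast
  then have "sqrt \<kappa> * diameter X < pi/2" using scaled_dist_less by metis
  then have "sqrt \<kappa> * diameter X \<le> pi" using pi_gt_zero by linarith
  moreover have "dist v w \<le> diameter X"
    using diameter_bounded_bound[OF compact_imp_bounded[OF compact_X] assms] .
  ultimately show ?thesis
    unfolding cos_diam_def using sqrt_kappa_pos scaled_dist_nonneg pi_gt_zero
    by (intro cos_monotone_0_pi_le) auto
qed

lemma Psi_nonneg: "x \<in> X \<Longrightarrow> y \<in> X \<Longrightarrow> 0 \<le> Psi \<kappa> x y"
  using cos_dist_pos[of y x] kappa_pos by (simp add: Psi_eq_phi phi_nonneg)

lemma Psi_le: "x \<in> X \<Longrightarrow> y \<in> X \<Longrightarrow> Psi \<kappa> x y \<le> phi cos_diam / \<kappa>"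
  using cos_diam_pos cos_diam_le[of y x] kappa_pos
  by (simp add: Psi_eq_phi divide_right_mono phi_antimono)

lemma Psi_lower_bound:
  assumes "v \<in> X" "w \<in> X"
  shows "(cos_diam * (sqrt \<kappa> * dist v w))\<^sup>2 \<le> \<kappa> * Psi \<kappa> v w"
proof -
  define D where "D = sqrt \<kappa> * dist v w"
  have D: "0 \<le> D" "D \<le> pi/2" using scaled_dist_nonneg scaled_dist_less[OF assms] by (auto simp: D_def)
  have "cos_diam * D \<le> cos D * D"
    using cos_diam_le[OF assms] D by (intro mult_right_mono) (auto simp: D_def)
  also have "\<dots> \<le> sin D" using x_cos_le_sin[OF D] by (simp add: mult.commute)
  finally have "(cos_diam * D)\<^sup>2 \<le> (sin D)\<^sup>2"
    using cos_diam_pos D by (intro power_mono) auto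
  also have "\<dots> = 1 - (cos D)\<^sup>2" by (simp add: sin_squared_eq)
  also have "\<dots> \<le> phi (cos D)"
    using cos_dist_pos[OF assms] by (intro one_minus_sq_le_phi) (auto simp: D_def)
  also have "\<dots> = \<kappa> * Psi \<kappa> v w" using kappa_pos by (simp add: Psi_eq_phi D_def dist_commute)
  finally show ?thesis by (simp add: D_def)
qed

lemma Psi_tendsto:
  assumes "x \<in> X" "q \<in> X" "u \<longlonglongrightarrow> q"
  shows "(\<lambda>n. Psi \<kappa> x (u n)) \<longlonglongrightarrow> Psi \<kappa> x q"
  using assms(3) cos_dist_pos[OF assms(2,1)] kappa_pos unfolding Psi_def
  by (intro tendsto_intros) auto

lemma Psi_midpoint_less:
  assumes X: "x \<in> X" "y \<in> X" "z \<in> X" and "y \<noteq> z" and \<gamma>: "geodesic_in X y z \<gamma>"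
  shows "Psi \<kappa> x (\<gamma> (dist y z / 2)) < (Psi \<kappa> x y + Psi \<kappa> x z) / 2"
proof -
  define w where "w = \<gamma> (dist y z / 2)"
  have w: "w \<in> X" using geodesic_in_mem[OF \<gamma>] by (simp add: w_def)
  define A where "A = sqrt \<kappa> * dist y z"
  have A: "0 < A" "A < pi/2" using \<open>y \<noteq> z\<close> sqrt_kappa_pos scaled_dist_less X by (auto simp: A_def)
  define cy cz cw where "cy = cos (sqrt \<kappa> * dist y x)" and "cz = cos (sqrt \<kappa> * dist z x)"
    and "cw = cos (sqrt \<kappa> * dist w x)"
  have pos: "0 < cy" "0 < cz" "0 < cw" using cos_dist_pos X w by (auto simp: cy_def cz_def cw_def)
  have "cy * sin (A - A / 2) + cz * sin (A / 2) \<le> cw * sin A"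
    using cos_comparison[OF X \<gamma>, of "dist y z / 2"]
    by (simp add: cy_def cz_def cw_def A_def w_def algebra_simps)
  then have "(cy + cz) * sin (A / 2) \<le> (2 * cw * cos (A / 2)) * sin (A / 2)"
    using sin_double[of "A / 2"] by (simp add: algebra_simps)
  moreover have "sin (A / 2) > 0" using A by (intro sin_gt_zero) auto
  ultimately have "cy + cz \<le> 2 * cw * cos (A / 2)" by simp
  also have "\<dots> < 2 * cw" using pos A cos_monotone_0_pi[of 0 "A / 2"] by simp
  finally have "phi cw < phi ((cy + cz) / 2)" using pos by (intro phi_strict_antimono) auto
  also have "\<dots> \<le> (phi cy + phi cz) / 2" using pos by (intro phi_midpoint_convex)
  finally show ?thesis
    using kappa_pos by (simp add: Psi_eq_phi cy_def cz_def cw_def w_def field_simps)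
qed

definition prox_point :: "('a \<Rightarrow> ereal) \<Rightarrow> real \<Rightarrow> 'a \<Rightarrow> 'a \<Rightarrow> bool" where
  "prox_point g lam x y \<longleftrightarrow>
     y \<in> X \<and> (\<forall>z\<in>X. g y + ereal (Psi \<kappa> x y / lam) \<le> g z + ereal (Psi \<kappa> x z / lam))"

lemma prox_point_exists:
  assumes lsc: "lsc_on X g" and not_minf: "\<forall>y\<in>X. g y \<noteq> -\<infinity>" and x: "x \<in> X"
  shows "\<exists>y. prox_point g lam x y"
proof -
  define h where "h y = g y + ereal (Psi \<kappa> x y / lam)" for y
  define m where "m = Inf (h ` X)"
  obtain u where u: "\<And>n. u n \<in> h ` X" "u \<longlonglongrightarrow> m"
    using Inf_as_limit[of "h ` X"] x unfolding m_def by auto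
  then have "\<forall>n. \<exists>y\<in>X. u n = h y" by blast
  then obtain v where v: "\<And>n. v n \<in> X" "\<And>n. u n = h (v n)" by metis
  obtain q r where q: "q \<in> X" "strict_mono r" "(v \<circ> r) \<longlonglongrightarrow> q"
    using seq_compactE[OF compact_imp_seq_compact[OF compact_X], of v] v(1) by blast
  have h_lim: "(\<lambda>n. h (v (r n))) \<longlonglongrightarrow> m"
    using LIMSEQ_subseq_LIMSEQ[OF u(2) q(2)] v(2) by (simp add: o_def)
  have "(\<lambda>n. Psi \<kappa> x (v (r n)) / lam) \<longlonglongrightarrow> Psi \<kappa> x q / lam"
    using tendsto_mult_right[OF Psi_tendsto[OF x q(1) q(3)], of "inverse lam"]
    by (simp add: o_def divide_inverse)
  then have Psi_lim: "(\<lambda>n. ereal (Psi \<kappa> x (v (r n)) / lam)) \<longlonglongrightarrow> ereal (Psi \<kappa> x q / lam)"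
    by simp
  have "g (v (r n)) = h (v (r n)) - ereal (Psi \<kappa> x (v (r n)) / lam)" for n
    by (cases "g (v (r n))") (simp_all add: h_def)
  then have "(\<lambda>n. g (v (r n))) \<longlonglongrightarrow> m - ereal (Psi \<kappa> x q / lam)"
    using tendsto_diff_ereal_general[OF h_lim Psi_lim] by simp
  then have "liminf (\<lambda>n. g (v (r n))) = m - ereal (Psi \<kappa> x q / lam)"
    by (intro lim_imp_Liminf) auto
  moreover have "g q \<le> liminf (\<lambda>n. g (v (r n)))"
    using lsc q v(1) unfolding lsc_on_def by (auto simp: o_def)
  ultimately have "h q \<le> m"
    by (cases m; cases "g q") (auto simp: h_def)
  moreover have "m \<le> h z" if "z \<in> X" for z using that unfolding m_def by (rule INF_lower)
  ultimately show ?thesis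
    unfolding prox_point_def h_def[symmetric] using q(1) order.trans by blast
qed

lemma prox_point_finite:
  assumes "prox_point g lam x y" "proper_on X g" "\<forall>y\<in>X. g y \<noteq> -\<infinity>"
  shows "\<bar>g y\<bar> \<noteq> \<infinity>"
proof -
  obtain z where z: "z \<in> X" "g z \<noteq> \<infinity>" using assms(2) unfolding proper_on_def by blast
  then have "g y + ereal (Psi \<kappa> x y / lam) \<noteq> \<infinity>"
    using assms(1) unfolding prox_point_def by (cases "g z") auto
  then show ?thesis using assms(1,3) unfolding prox_point_def by auto
qed

lemma prox_point_unique:
  assumes conv: "geo_convex X g" and proper: "proper_on X g" and not_minf: "\<forall>y\<in>X. g y \<noteq> -\<infinity>"
    and lam: "lam > 0" and x: "x \<in> X"
    and y: "prox_point g lam x y" and z: "prox_point g lam x z"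
  shows "y = z"
proof (rule ccontr)
  assume "y \<noteq> z"
  have X: "y \<in> X" "z \<in> X" using y z unfolding prox_point_def by auto
  obtain a b where ab: "g y = ereal a" "g z = ereal b"
    using prox_point_finite[OF y proper not_minf] prox_point_finite[OF z proper not_minf] by force
  have value_eq: "a + Psi \<kappa> x y / lam = b + Psi \<kappa> x z / lam"
    using y z X ab unfolding prox_point_def by (metis antisym ereal_less_eq(3) plus_ereal.simps(1))
  obtain \<gamma> where \<gamma>: "geodesic_in X y z \<gamma>" using geodesic_exists X by blast
  define w where "w = \<gamma> (dist y z / 2)"
  have w: "w \<in> X" using geodesic_in_mem[OF \<gamma>] by (simp add: w_def)
  have "\<forall>t\<in>{0..1}. g (\<gamma> (t * dist y z)) \<le> ereal (1 - t) * g y + ereal t * g z"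
    using conv X \<gamma> unfolding geo_convex_def by blast
  then have "g (\<gamma> (1/2 * dist y z)) \<le> ereal (1 - 1/2) * g y + ereal (1/2) * g z"
    by (rule bspec) simp
  then have g_w: "g w \<le> ereal ((a + b) / 2)" using ab by (simp add: w_def add_divide_distrib)
  have "g y + ereal (Psi \<kappa> x y / lam) \<le> g w + ereal (Psi \<kappa> x w / lam)"
    using y w unfolding prox_point_def by auto
  also have "\<dots> \<le> ereal ((a + b) / 2 + Psi \<kappa> x w / lam)"
    using g_w by (cases "g w") auto
  finally have "a + Psi \<kappa> x y / lam \<le> (a + b) / 2 + Psi \<kappa> x w / lam"
    using ab by simp
  moreover have "Psi \<kappa> x w / lam < (Psi \<kappa> x y / lam + Psi \<kappa> x z / lam) / 2"
    using Psi_midpoint_less[OF x X \<open>y \<noteq> z\<close> \<gamma>] lam by (simp add: w_def field_simps)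
  ultimately show False using value_eq by (simp add: field_simps)
qed

lemma resolvent_prox_point:
  assumes "geo_convex X g" "proper_on X g" "\<forall>y\<in>X. g y \<noteq> -\<infinity>" "lsc_on X g" "lam > 0" "x \<in> X"
  shows "prox_point g lam x (resolvent \<kappa> X g lam x)"
proof -
  have "\<exists>!y. prox_point g lam x y"
    using prox_point_exists prox_point_unique assms by metis
  then show ?thesis unfolding resolvent_def prox_point_def[symmetric] by (rule theI')
qed

lemma Psi_along_geodesic_le:
  assumes X: "x \<in> X" "y \<in> X" "z \<in> X" and "y \<noteq> z" and \<gamma>: "geodesic_in X y z \<gamma>"
    and t: "0 < t" "t \<le> 1"
  defines "\<theta> \<equiv> sqrt \<kappa> * dist y z"
  shows "\<kappa> * Psi \<kappa> x (\<gamma> (t * dist y z)) \<le>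
    phi ((cos (sqrt \<kappa> * dist y x) * sin ((1 - t) * \<theta>) + cos (sqrt \<kappa> * dist z x) * sin (t * \<theta>)) / sin \<theta>)"
proof -
  define w where "w = \<gamma> (t * dist y z)"
  have w: "w \<in> X" using geodesic_in_mem[OF \<gamma>] t by (simp add: w_def mult_left_le_one_le)
  have \<theta>: "0 < \<theta>" "\<theta> < pi/2" using \<open>y \<noteq> z\<close> sqrt_kappa_pos scaled_dist_less X by (auto simp: \<theta>_def)
  then have sin_\<theta>: "sin \<theta> > 0" by (intro sin_gt_zero) auto
  have "t * \<theta> \<le> \<theta>" "(1 - t) * \<theta> \<le> \<theta>" using t \<theta> by (simp_all add: mult_left_le_one_le)
  then have "t * \<theta> < pi" "(1 - t) * \<theta> \<le> pi" using \<theta> pi_gt_zero by linarith+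
  then have "sin (t * \<theta>) > 0" "sin ((1 - t) * \<theta>) \<ge> 0"
    using t \<theta> by (auto intro!: sin_gt_zero sin_ge_zero)
  then have pos: "0 < (cos (sqrt \<kappa> * dist y x) * sin ((1 - t) * \<theta>) + cos (sqrt \<kappa> * dist z x) * sin (t * \<theta>)) / sin \<theta>"
    using cos_dist_pos[of y x] cos_dist_pos[of z x] X sin_\<theta>
    by (intro divide_pos_pos add_nonneg_pos mult_nonneg_nonneg mult_pos_pos) auto
  have "cos (sqrt \<kappa> * dist y x) * sin (\<theta> - t * \<theta>) + cos (sqrt \<kappa> * dist z x) * sin (t * \<theta>)
      \<le> cos (sqrt \<kappa> * dist w x) * sin \<theta>"
    using cos_comparison[OF X \<gamma>, of "t * dist y z"] t
    by (simp add: w_def \<theta>_def mult_left_le_one_le mult.left_commute)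
  then have "(cos (sqrt \<kappa> * dist y x) * sin ((1 - t) * \<theta>) + cos (sqrt \<kappa> * dist z x) * sin (t * \<theta>)) / sin \<theta>
      \<le> cos (sqrt \<kappa> * dist w x)"
    using sin_\<theta> by (simp add: divide_le_eq left_diff_distrib)
  from phi_antimono[OF pos this] show ?thesis
    using kappa_pos by (simp add: Psi_eq_phi w_def)
qed

lemma prox_point_slope:
  assumes "prox_point g lam x x'" "lam > 0" "w \<in> X"
    and "g x' = ereal a" "g w \<le> ereal ((1 - t) * a + t * b)"
  shows "t * (a - b) * lam \<le> Psi \<kappa> x w - Psi \<kappa> x x'"
proof -
  have "g x' + ereal (Psi \<kappa> x x' / lam) \<le> g w + ereal (Psi \<kappa> x w / lam)"
    using assms(1,3) unfolding prox_point_def by auto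
  also have "\<dots> \<le> ereal ((1 - t) * a + t * b + Psi \<kappa> x w / lam)"
    using assms(5) by (cases "g w") auto
  finally have "a + Psi \<kappa> x x' / lam \<le> (1 - t) * a + t * b + Psi \<kappa> x w / lam"
    using assms(4) by simp
  then have "t * (a - b) \<le> (Psi \<kappa> x w - Psi \<kappa> x x') / lam"
    by (simp add: algebra_simps diff_divide_distrib)
  then show ?thesis using assms(2) by (simp add: pos_le_divide_eq)
qed

text \<open>Minimality of \<open>x'\<close> against the points \<open>\<gamma> t\<close> of the geodesic towards \<open>y\<close>, together with
  the comparison bound \<open>\<kappa> \<Psi>\<^sub>x(\<gamma> t) \<le> \<phi>(m t)\<close>, bounds \<open>\<kappa> \<lambda> (g x' - g y)\<close> by the right
  derivative of \<open>\<phi> \<circ> m\<close> at \<open>0\<close>.\<close>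

lemma prox_variational_inequality:
  assumes conv: "geo_convex X g" and lam: "lam > 0" and x: "x \<in> X"
    and prox: "prox_point g lam x x'" and y: "y \<in> X"
    and a: "g x' = ereal a" and b: "g y = ereal b"
  defines "c \<equiv> cos (sqrt \<kappa> * dist x' x)"
  shows "(sqrt \<kappa> * dist x' y)\<^sup>2 \<le> (sqrt \<kappa> * dist x y)\<^sup>2 - 2 * \<kappa> * lam * (c / (1 + c\<^sup>2)) * (a - b)"
proof (cases "x' = y")
  case True
  then show ?thesis using a b by simp
next
  case False
  have x': "x' \<in> X" using prox unfolding prox_point_def by auto
  define cy where "cy = cos (sqrt \<kappa> * dist y x)"
  define \<theta> where "\<theta> = sqrt \<kappa> * dist x' y"
  define m where "m t = (c * sin ((1 - t) * \<theta>) + cy * sin (t * \<theta>)) / sin \<theta>" for t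
  have c: "0 < c" "c \<le> 1" and cy: "0 < cy" using cos_dist_pos x x' y by (auto simp: c_def cy_def)
  have \<theta>: "0 < \<theta>" "\<theta> < pi/2" using False sqrt_kappa_pos scaled_dist_less x' y by (auto simp: \<theta>_def)
  then have sin_\<theta>: "sin \<theta> \<noteq> 0" by (simp add: sin_gt_zero less_imp_neq[symmetric])
  obtain \<gamma> where \<gamma>: "geodesic_in X x' y \<gamma>" using geodesic_exists x' y by blast
  have slope: "t * (\<kappa> * lam * (a - b)) \<le> phi (m t) - phi (m 0)" if t: "0 < t" "t \<le> 1" for t
  proof -
    define w where "w = \<gamma> (t * dist x' y)"
    have w: "w \<in> X" using geodesic_in_mem[OF \<gamma>] t by (simp add: w_def mult_left_le_one_le)
    have "\<forall>t\<in>{0..1}. g (\<gamma> (t * dist x' y)) \<le> ereal (1 - t) * g x' + ereal t * g y"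
      using conv x' y \<gamma> unfolding geo_convex_def by blast
    then have "g w \<le> ereal ((1 - t) * a + t * b)" using t a b by (simp add: w_def)
    from prox_point_slope[OF prox lam w a this]
    have "t * (a - b) * lam * \<kappa> \<le> \<kappa> * Psi \<kappa> x w - \<kappa> * Psi \<kappa> x x'"
      using kappa_pos by (simp add: right_diff_distrib[symmetric])
    also have "\<kappa> * Psi \<kappa> x w \<le> phi (m t)"
      using Psi_along_geodesic_le[OF x x' y False \<gamma> t] by (simp add: w_def m_def c_def cy_def \<theta>_def)
    also have "\<kappa> * Psi \<kappa> x x' = phi (m 0)"
      using kappa_pos sin_\<theta> by (simp add: Psi_eq_phi m_def c_def)
    finally show ?thesis by (simp add: algebra_simps)
  qed
  have "((\<lambda>t. phi (m t)) has_real_derivative (1 / c\<^sup>2 + 1) * (c * cos \<theta> - cy) * \<theta> / sin \<theta>) (at 0)"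
    using phi_arc_has_derivative[OF c(1) sin_\<theta>] by (simp add: m_def)
  from slope_le_derivative[OF this slope]
  have "2 * (c / (1 + c\<^sup>2)) * (\<kappa> * lam * (a - b)) \<le> (sqrt \<kappa> * dist x y)\<^sup>2 - \<theta>\<^sup>2"
    using scaled_dist_nonneg scaled_dist_less[OF x y] c cy \<theta>
    by (intro slope_bound_to_sq_dist) (auto simp: cy_def dist_commute)
  then show ?thesis by (simp add: \<theta>_def algebra_simps)
qed

lemma prox_point_gap_le:
  assumes "prox_point g lam x x'" "lam > 0" "x \<in> X" "y \<in> X" "g x' = ereal a" "g y = ereal b"
  shows "a - b \<le> phi cos_diam / \<kappa> / lam"
proof -
  have x': "x' \<in> X" using assms(1) unfolding prox_point_def by blast
  have "g x' + ereal (Psi \<kappa> x x' / lam) \<le> g y + ereal (Psi \<kappa> x y / lam)"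
    using assms(1,4) unfolding prox_point_def by blast
  then have "a + Psi \<kappa> x x' / lam \<le> b + Psi \<kappa> x y / lam" using assms(5,6) by simp
  moreover have "0 \<le> Psi \<kappa> x x' / lam" using Psi_nonneg[OF assms(3) x'] assms(2) by simp
  moreover have "Psi \<kappa> x y / lam \<le> phi cos_diam / \<kappa> / lam"
    using divide_right_mono[OF Psi_le[OF assms(3,4)]] assms(2) by simp
  ultimately show ?thesis by linarith
qed

lemma prox_point_descent:
  assumes "prox_point g lam x x'" "x \<in> X" "lam > 0" "g x' = ereal a" "g x = ereal b"
  shows "Psi \<kappa> x x' \<le> lam * (b - a)"
proof -
  have "g x' + ereal (Psi \<kappa> x x' / lam) \<le> g x + ereal (Psi \<kappa> x x / lam)"
    using assms(1,2) unfolding prox_point_def by auto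
  then show ?thesis using assms(3-) by (simp add: Psi_self field_simps)
qed

lemma dist_le_if_Psi_le:
  assumes "v \<in> X" "w \<in> X" "0 \<le> l" "0 \<le> L" "Psi \<kappa> v w \<le> l * (L * dist v w)"
  shows "dist v w \<le> L / cos_diam\<^sup>2 * l"
proof (cases "dist v w = 0")
  case False
  have "\<kappa> * (cos_diam\<^sup>2 * dist v w * dist v w) = (cos_diam * (sqrt \<kappa> * dist v w))\<^sup>2"
    using kappa_pos by (simp add: power_mult_distrib power2_eq_square)
  also have "\<dots> \<le> \<kappa> * Psi \<kappa> v w" using Psi_lower_bound[OF assms(1,2)] .
  also have "\<dots> \<le> \<kappa> * (l * L * dist v w)" using assms(5) kappa_pos by (simp add: mult.assoc)
  finally have "cos_diam\<^sup>2 * dist v w * dist v w \<le> l * L * dist v w" using kappa_pos by simp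
  then have "cos_diam\<^sup>2 * dist v w \<le> l * L" using False by (simp add: zero_less_dist_iff)
  then show ?thesis using cos_diam_pos by (simp add: field_simps)
qed (use assms(3,4) in simp)

end

section \<open>The cyclic proximal point algorithm\<close>

locale cyclic_proximal_point = small_CAT_space +
  fixes N :: nat and f :: "nat \<Rightarrow> 'a \<Rightarrow> ereal" and lam :: "nat \<Rightarrow> real"
    and x :: "nat \<Rightarrow> 'a" and L :: real
  assumes N: "N \<ge> 1"
    and f_not_minf: "\<forall>i\<in>{1..N}. \<forall>y\<in>X. f i y \<noteq> -\<infinity>"
    and f_proper: "\<forall>i\<in>{1..N}. proper_on X (f i)"
    and f_convex: "\<forall>i\<in>{1..N}. geo_convex X (f i)"
    and f_lsc: "\<forall>i\<in>{1..N}. lsc_on X (f i)"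
    and attains_min: "\<exists>z\<in>X. \<forall>y\<in>X. (\<Sum>i=1..N. f i z) \<le> (\<Sum>i=1..N. f i y)"
    and x0: "x 0 \<in> X"
    and lam_pos: "\<forall>j. lam j > 0"
    and lam_not_summable: "\<not> summable lam"
    and lam_sq_summable: "summable (\<lambda>j. (lam j)\<^sup>2)"
    and x_step: "\<forall>j. \<forall>i\<in>{1..N}. x (j * N + i) = resolvent \<kappa> X (f i) (lam j) (x (j * N + i - 1))"
    and L: "L > 0"
    and Lip: "\<forall>j. \<forall>i\<in>{1..N}.
        f i (x (j * N)) \<le> f i (x (j * N + i)) + ereal (L * dist (x (j * N)) (x (j * N + i))) \<and>
        f i (x (j * N + i - 1)) \<le> f i (x (j * N + i)) + ereal (L * dist (x (j * N + i - 1)) (x (j * N + i)))"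
begin

lemma x_in_X: "x n \<in> X"
proof (induction n)
  case (Suc m)
  define j i where "j = m div N" and "i = m mod N + 1"
  have "m mod N < N" using N by simp
  then have i: "i \<in> {1..N}" and "Suc m = j * N + i" and "j * N + i - 1 = m"
    by (simp_all add: j_def i_def)
  then have "x (Suc m) = resolvent \<kappa> X (f i) (lam j) (x m)" using x_step by metis
  then show ?case
    using resolvent_prox_point[of "f i" "lam j" "x m"] i f_convex f_proper f_not_minf f_lsc lam_pos Suc
    by (simp add: prox_point_def)
qed (rule x0)

lemma x_prox_point: "i \<in> {1..N} \<Longrightarrow> prox_point (f i) (lam j) (x (j * N + i - 1)) (x (j * N + i))"
  using x_step f_convex f_proper f_not_minf f_lsc lam_pos x_in_X by (auto intro: resolvent_prox_point)

lemma f_x_finite: "i \<in> {1..N} \<Longrightarrow> \<bar>f i (x (j * N + i))\<bar> \<noteq> \<infinity>"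
  using prox_point_finite[OF x_prox_point] f_proper f_not_minf by auto

lemma f_finite_if_Lip_bounded:
  assumes "i \<in> {1..N}" "y \<in> X" "f i y \<le> f i (x (j * N + i)) + ereal (L * d)"
  shows "\<bar>f i y\<bar> \<noteq> \<infinity>"
  using assms f_x_finite[OF assms(1), of j] f_not_minf
  by (cases "f i (x (j * N + i))"; cases "f i y") auto

lemma f_cycle_start_finite:
  assumes "i \<in> {1..N}"
  shows "\<bar>f i (x (j * N))\<bar> \<noteq> \<infinity>"
  using Lip assms by (intro f_finite_if_Lip_bounded[OF assms x_in_X]) blast

lemma f_x_prev_finite:
  assumes "i \<in> {1..N}"
  shows "\<bar>f i (x (j * N + i - 1))\<bar> \<noteq> \<infinity>"
  using Lip assms by (intro f_finite_if_Lip_bounded[OF assms x_in_X]) blast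

definition f_real :: "nat \<Rightarrow> 'a \<Rightarrow> real" where
  "f_real i y = real_of_ereal (f i y)"

lemma f_eq_f_real: "\<bar>f i y\<bar> \<noteq> \<infinity> \<Longrightarrow> f i y = ereal (f_real i y)"
  unfolding f_real_def by (cases "f i y") auto

definition step_const :: real where
  "step_const = L / cos_diam\<^sup>2"

lemma step_const_nonneg: "0 \<le> step_const"
  using L by (simp add: step_const_def)

lemma step_dist_le:
  assumes i: "i \<in> {1..N}"
  shows "dist (x (j * N + i - 1)) (x (j * N + i)) \<le> step_const * lam j"
proof -
  define u v where "u = x (j * N + i - 1)" and "v = x (j * N + i)"
  have fu: "f i u = ereal (f_real i u)" and fv: "f i v = ereal (f_real i v)"
    using f_eq_f_real f_x_prev_finite[OF i] f_x_finite[OF i] by (auto simp: u_def v_def)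
  have "Psi \<kappa> u v \<le> lam j * (f_real i u - f_real i v)"
    using prox_point_descent[OF x_prox_point[OF i, of j, folded u_def v_def]
        x_in_X[of "j * N + i - 1", folded u_def] _ fv fu] lam_pos
    by simp
  also have "f_real i u - f_real i v \<le> L * dist u v"
  proof -
    have "f i u \<le> f i v + ereal (L * dist u v)" using Lip i unfolding u_def v_def by blast
    then show ?thesis using fu fv by simp
  qed
  finally have "Psi \<kappa> u v \<le> lam j * (L * dist u v)"
    using lam_pos by (simp add: mult_left_mono)
  then show ?thesis
    using dist_le_if_Psi_le[of u v] x_in_X lam_pos L by (simp add: u_def v_def step_const_def less_imp_le)
qed

lemma cycle_dist_le: "i \<le> N \<Longrightarrow> dist (x (j * N)) (x (j * N + i)) \<le> i * step_const * lam j"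
proof (induction i)
  case (Suc i)
  have "dist (x (j * N)) (x (j * N + Suc i))
      \<le> dist (x (j * N)) (x (j * N + i)) + dist (x (j * N + i)) (x (j * N + Suc i))"
    by (rule dist_triangle)
  also have "dist (x (j * N + i)) (x (j * N + Suc i)) \<le> step_const * lam j"
    using step_dist_le[of "Suc i" j] Suc.prems by simp
  finally show ?case using Suc by (simp add: algebra_simps)
qed simp

lemma f_cycle_start_le:
  assumes i: "i \<in> {1..N}"
  shows "f_real i (x (j * N)) \<le> f_real i (x (j * N + i)) + L * (N * step_const * lam j)"
proof -
  have "f i (x (j * N)) \<le> f i (x (j * N + i)) + ereal (L * dist (x (j * N)) (x (j * N + i)))"
    using Lip i by simp
  then have "f_real i (x (j * N)) \<le> f_real i (x (j * N + i)) + L * dist (x (j * N)) (x (j * N + i))"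
    using f_eq_f_real[OF f_x_finite[OF i]] f_eq_f_real[OF f_cycle_start_finite[OF i]] by simp
  also have "dist (x (j * N)) (x (j * N + i)) \<le> i * step_const * lam j"
    using cycle_dist_le[of i j] i by simp
  also have "\<dots> \<le> N * step_const * lam j"
    using i step_const_nonneg lam_pos by (intro mult_right_mono) (auto simp: less_imp_le)
  finally show ?thesis using L by simp
qed

definition error_const :: real where
  "error_const = \<kappa> * (L * N * step_const + step_const\<^sup>2 * phi cos_diam)"

lemma phi_cos_diam_nonneg: "0 \<le> phi cos_diam"
  using cos_diam_pos by (intro phi_nonneg) (auto simp: cos_diam_def)

lemma error_const_nonneg: "0 \<le> error_const"
  using kappa_pos L step_const_nonneg phi_cos_diam_nonneg by (simp add: error_const_def)

lemma dist_sq_step: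
  assumes p: "p \<in> X" and fp: "\<bar>f i p\<bar> \<noteq> \<infinity>" and i: "i \<in> {1..N}"
  shows "(sqrt \<kappa> * dist (x (j * N + i)) p)\<^sup>2 \<le> (sqrt \<kappa> * dist (x (j * N + i - 1)) p)\<^sup>2
     - \<kappa> * lam j * (f_real i (x (j * N)) - f_real i p) + error_const * (lam j)\<^sup>2"
proof -
  define u v l where "u = x (j * N + i - 1)" and "v = x (j * N + i)" and "l = lam j"
  have l: "0 < l" using lam_pos by (simp add: l_def)
  have uv: "u \<in> X" "v \<in> X" using x_in_X by (simp_all add: u_def v_def)
  have prox: "prox_point (f i) l u v" using x_prox_point[OF i] by (simp add: u_def v_def l_def)
  have fv: "f i v = ereal (f_real i v)" using f_eq_f_real f_x_finite[OF i] by (simp add: v_def)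
  have fp': "f i p = ereal (f_real i p)" using f_eq_f_real fp by simp
  define a where "a = f_real i v - f_real i p"
  define D where "D = sqrt \<kappa> * dist v u"
  define \<rho> where "\<rho> = cos D / (1 + (cos D)\<^sup>2)"
  define M where "M = phi cos_diam / \<kappa>"
  have var: "(sqrt \<kappa> * dist v p)\<^sup>2 \<le> (sqrt \<kappa> * dist u p)\<^sup>2 - 2 * \<kappa> * l * \<rho> * a"
    using prox_variational_inequality[OF _ l uv(1) prox p fv fp'] f_convex i
    by (simp add: \<rho>_def D_def a_def)
  have a_le: "a \<le> M / l"
    using prox_point_gap_le[OF prox l uv(1) p fv fp'] by (simp add: a_def M_def)
  have D: "0 \<le> D" "D \<le> sqrt \<kappa> * (step_const * l)"
    using step_dist_le[OF i, of j] sqrt_kappa_pos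
    by (simp_all add: D_def u_def v_def l_def dist_commute)
  have "1 - 2 * \<rho> \<le> D\<^sup>2" "2 * \<rho> \<le> 1"
    unfolding \<rho>_def by (rule twice_cos_ratio_defect_le[OF D(1)], rule twice_ratio_le_one)
  moreover have "0 \<le> M / l" using phi_cos_diam_nonneg kappa_pos l by (simp add: M_def)
  ultimately have "(1 - 2 * \<rho>) * a \<le> (sqrt \<kappa> * (step_const * l))\<^sup>2 * (M / l)"
    using D a_le by (intro descent_error_bound)
  also have "\<dots> = \<kappa> * (step_const * l)\<^sup>2 * (M / l)"
    using kappa_pos by (simp add: power_mult_distrib)
  also have "\<dots> = step_const\<^sup>2 * phi cos_diam * l"
    using kappa_pos l by (simp add: M_def power2_eq_square field_simps)
  finally have "\<kappa> * l * ((1 - 2 * \<rho>) * a) \<le> \<kappa> * l * (step_const\<^sup>2 * phi cos_diam * l)"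
    by (rule mult_left_mono) (use kappa_pos l in auto)
  then have err: "\<kappa> * l * ((1 - 2 * \<rho>) * a) \<le> \<kappa> * step_const\<^sup>2 * phi cos_diam * l\<^sup>2"
    by (simp add: power2_eq_square mult_ac)
  have "f_real i (x (j * N)) \<le> f_real i v + L * (N * step_const * l)"
    using f_cycle_start_le[OF i, of j] by (simp add: v_def l_def)
  then have "\<kappa> * l * f_real i (x (j * N)) \<le> \<kappa> * l * (f_real i v + L * (N * step_const * l))"
    by (rule mult_left_mono) (use kappa_pos l in auto)
  then have lip: "\<kappa> * l * (f_real i (x (j * N)) - f_real i p) \<le> \<kappa> * l * a + \<kappa> * L * N * step_const * l\<^sup>2"
    by (simp add: a_def power2_eq_square algebra_simps)
  have "2 * \<kappa> * l * \<rho> * a = \<kappa> * l * a - \<kappa> * l * ((1 - 2 * \<rho>) * a)" by (simp add: algebra_simps)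
  with var err lip show ?thesis
    by (simp add: u_def v_def l_def error_const_def dist_commute algebra_simps)
qed

lemma dist_sq_partial_cycle:
  assumes p: "p \<in> X" and fp: "\<forall>i\<in>{1..N}. \<bar>f i p\<bar> \<noteq> \<infinity>"
  shows "i \<le> N \<Longrightarrow> (sqrt \<kappa> * dist (x (j * N + i)) p)\<^sup>2 \<le> (sqrt \<kappa> * dist (x (j * N)) p)\<^sup>2
     - \<kappa> * lam j * (\<Sum>k=1..i. f_real k (x (j * N)) - f_real k p) + i * error_const * (lam j)\<^sup>2"
proof (induction i)
  case (Suc i)
  then have i: "Suc i \<in> {1..N}" by simp
  from dist_sq_step[OF p _ i, of j] fp i Suc show ?case
    by (simp add: algebra_simps)
qed simp

definition f_sum :: "'a \<Rightarrow> real" where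
  "f_sum y = (\<Sum>i=1..N. f_real i y)"

lemma dist_sq_cycle:
  assumes "p \<in> X" "\<forall>i\<in>{1..N}. \<bar>f i p\<bar> \<noteq> \<infinity>"
  shows "(sqrt \<kappa> * dist (x (Suc j * N)) p)\<^sup>2 \<le> (sqrt \<kappa> * dist (x (j * N)) p)\<^sup>2
     - \<kappa> * lam j * (f_sum (x (j * N)) - f_sum p) + N * error_const * (lam j)\<^sup>2"
  using dist_sq_partial_cycle[OF assms, of N j] by (simp add: f_sum_def sum_subtractf add.commute)

lemma sum_f_eq_f_sum:
  assumes "\<forall>i\<in>{1..N}. \<bar>f i y\<bar> \<noteq> \<infinity>"
  shows "(\<Sum>i=1..N. f i y) = ereal (f_sum y)"
proof -
  have "(\<Sum>i=1..N. f i y) = (\<Sum>i=1..N. ereal (f_real i y))"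
    using assms by (intro sum.cong refl f_eq_f_real) auto
  then show ?thesis by (simp add: f_sum_def)
qed

lemma sum_f_cycle_start: "(\<Sum>i=1..N. f i (x (j * N))) = ereal (f_sum (x (j * N)))"
  using f_cycle_start_finite by (intro sum_f_eq_f_sum) auto

lemma minimiser_finite:
  assumes "p \<in> X" and min: "\<forall>y\<in>X. (\<Sum>i=1..N. f i p) \<le> (\<Sum>i=1..N. f i y)"
  shows "\<forall>i\<in>{1..N}. \<bar>f i p\<bar> \<noteq> \<infinity>"
proof
  fix i assume i: "i \<in> {1..N}"
  have "(\<Sum>i=1..N. f i p) \<le> (\<Sum>i=1..N. f i (x (0 * N)))"
    using min x_in_X by blast
  then have "(\<Sum>i=1..N. f i p) \<le> ereal (f_sum (x (0 * N)))"
    by (simp only: sum_f_cycle_start)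
  then have "(\<Sum>i=1..N. f i p) \<noteq> \<infinity>" by auto
  then have "f i p \<noteq> \<infinity>" using i by (auto simp: sum_Pinfty)
  then show "\<bar>f i p\<bar> \<noteq> \<infinity>" using f_not_minf i assms(1) by auto
qed

lemma minimiser_quasi_fejer:
  assumes p: "p \<in> X" and min: "\<forall>y\<in>X. (\<Sum>i=1..N. f i p) \<le> (\<Sum>i=1..N. f i y)"
  shows "convergent (\<lambda>j. (sqrt \<kappa> * dist (x (j * N)) p)\<^sup>2)"
    and "summable (\<lambda>j. lam j * (f_sum (x (j * N)) - f_sum p))"
    and "f_sum p \<le> f_sum (x (j * N))"
proof -
  have fp: "\<forall>i\<in>{1..N}. \<bar>f i p\<bar> \<noteq> \<infinity>" by (rule minimiser_finite[OF p min])
  have gap: "f_sum p \<le> f_sum (x (j * N))" for j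
  proof -
    have "(\<Sum>i=1..N. f i p) \<le> (\<Sum>i=1..N. f i (x (j * N)))" using min x_in_X by blast
    then show ?thesis by (simp only: sum_f_cycle_start sum_f_eq_f_sum[OF fp] ereal_less_eq)
  qed
  then show "f_sum p \<le> f_sum (x (j * N))" .
  define V where "V j = (sqrt \<kappa> * dist (x (j * N)) p)\<^sup>2" for j
  define w where "w j = \<kappa> * lam j * (f_sum (x (j * N)) - f_sum p)" for j
  define b where "b j = N * error_const * (lam j)\<^sup>2" for j
  have "V (Suc j) \<le> V j - w j + b j" for j
    using dist_sq_cycle[OF p fp, of j] by (simp add: V_def w_def b_def)
  moreover have "0 \<le> w j" for j using gap[of j] kappa_pos lam_pos by (simp add: w_def less_imp_le)
  moreover have "0 \<le> b j" for j using error_const_nonneg by (simp add: b_def)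
  moreover have "summable b" unfolding b_def by (rule summable_mult[OF lam_sq_summable])
  ultimately have "convergent V" "summable w"
    using quasi_fejer_convergent[of V w b] by (auto simp: V_def)
  then show "convergent (\<lambda>j. (sqrt \<kappa> * dist (x (j * N)) p)\<^sup>2)"
    and "summable (\<lambda>j. lam j * (f_sum (x (j * N)) - f_sum p))"
    using summable_mult[of w "1 / \<kappa>"] kappa_pos by (simp_all add: V_def[abs_def] w_def[abs_def])
qed

lemma lam_tendsto_zero: "lam \<longlonglongrightarrow> 0"
proof -
  have "(\<lambda>j. sqrt ((lam j)\<^sup>2)) \<longlonglongrightarrow> sqrt 0"
    using summable_LIMSEQ_zero[OF lam_sq_summable] by (intro tendsto_real_sqrt)
  then show ?thesis using lam_pos by (simp add: less_imp_le)
qed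

lemma minimiser_cluster_point:
  obtains q t where "q \<in> X" "\<forall>y\<in>X. (\<Sum>i=1..N. f i q) \<le> (\<Sum>i=1..N. f i y)"
    and "strict_mono t" "(\<lambda>k. x (t k * N)) \<longlonglongrightarrow> q"
proof -
  obtain p where p: "p \<in> X" and p_min: "\<forall>y\<in>X. (\<Sum>i=1..N. f i p) \<le> (\<Sum>i=1..N. f i y)"
    using attains_min by blast
  have lsc: "lsc_on X (\<lambda>y. \<Sum>i=1..N. f i y)" using f_lsc f_not_minf by (intro lsc_on_sum) auto
  define u where "u j = f_sum (x (j * N)) - f_sum p" for j
  obtain r where r: "strict_mono r" "(u \<circ> r) \<longlonglongrightarrow> 0"
    using subseq_tendsto_zero_if_weighted_summable[of lam u] minimiser_quasi_fejer[OF p p_min]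
      lam_pos lam_not_summable by (auto simp: u_def)
  obtain q \<sigma> where q: "q \<in> X" "strict_mono \<sigma>" "((\<lambda>k. x (r k * N)) \<circ> \<sigma>) \<longlonglongrightarrow> q"
    using seq_compactE[OF compact_imp_seq_compact[OF compact_X], of "\<lambda>k. x (r k * N)"] x_in_X by blast
  define t where "t = r \<circ> \<sigma>"
  have xt: "(\<lambda>k. x (t k * N)) \<longlonglongrightarrow> q" using q(3) by (simp add: t_def o_def)
  have "(\<lambda>k. u (t k)) \<longlonglongrightarrow> 0" using LIMSEQ_subseq_LIMSEQ[OF r(2) q(2)] by (simp add: t_def o_def)
  then have "(\<lambda>k. u (t k) + f_sum p) \<longlonglongrightarrow> 0 + f_sum p" by (intro tendsto_add) auto
  then have "(\<lambda>k. f_sum (x (t k * N))) \<longlonglongrightarrow> f_sum p" by (simp add: u_def)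
  then have "liminf (\<lambda>k. ereal (f_sum (x (t k * N)))) = ereal (f_sum p)"
    by (intro lim_imp_Liminf) auto
  then have "liminf (\<lambda>k. (\<Sum>i=1..N. f i (x (t k * N)))) = (\<Sum>i=1..N. f i p)"
    by (simp only: sum_f_cycle_start sum_f_eq_f_sum[OF minimiser_finite[OF p p_min]])
  moreover have "(\<Sum>i=1..N. f i q) \<le> liminf (\<lambda>k. (\<Sum>i=1..N. f i (x (t k * N))))"
    using lsc q(1) xt x_in_X unfolding lsc_on_def by simp
  ultimately have "\<forall>y\<in>X. (\<Sum>i=1..N. f i q) \<le> (\<Sum>i=1..N. f i y)" using p_min by auto
  moreover have "strict_mono t" unfolding t_def using r(1) q(2) by (rule strict_mono_o)
  ultimately show ?thesis using that q(1) xt by blast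
qed

lemma tendsto_if_cycle_starts_tendsto:
  assumes "(\<lambda>j. dist (x (j * N)) q) \<longlonglongrightarrow> 0"
  shows "x \<longlonglongrightarrow> q"
proof (rule metric_LIMSEQ_I)
  fix e :: real assume "e > 0"
  have "(\<lambda>j. N * step_const * lam j + dist (x (j * N)) q) \<longlonglongrightarrow> N * step_const * 0 + 0"
    using lam_tendsto_zero assms by (intro tendsto_intros)
  from metric_LIMSEQ_D[OF this \<open>e > 0\<close>] obtain J
    where "\<forall>j\<ge>J. dist (N * step_const * lam j + dist (x (j * N)) q) (N * step_const * 0 + 0) < e"
    by blast
  then have J: "\<And>j. j \<ge> J \<Longrightarrow> N * step_const * lam j + dist (x (j * N)) q < e"
    by (auto simp: dist_real_def)
  show "\<exists>n0. \<forall>n\<ge>n0. dist (x n) q < e"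
  proof (intro exI allI impI)
    fix n assume n: "J * N \<le> n"
    define j i where "j = n div N" and "i = n mod N"
    have n_eq: "n = j * N + i" and i: "i \<le> N" using N by (simp_all add: j_def i_def less_imp_le)
    have "J \<le> j" using div_le_mono[OF n, of N] N by (simp add: j_def)
    have "dist (x n) q \<le> dist (x (j * N)) (x n) + dist (x (j * N)) q" by (rule dist_triangle3)
    also have "dist (x (j * N)) (x n) \<le> i * step_const * lam j" using cycle_dist_le[OF i, of j] n_eq by simp
    also have "\<dots> \<le> N * step_const * lam j"
      using i step_const_nonneg lam_pos by (intro mult_right_mono) (auto simp: less_imp_le)
    also have "N * step_const * lam j + dist (x (j * N)) q < e" using J[OF \<open>J \<le> j\<close>] .
    finally show "dist (x n) q < e" by simp
  qed
qed

theorem iterates_converge_to_minimiser: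
  "\<exists>p\<in>X. x \<longlonglongrightarrow> p \<and> (\<forall>y\<in>X. (\<Sum>i=1..N. f i p) \<le> (\<Sum>i=1..N. f i y))"
proof -
  obtain q t where q: "q \<in> X" and q_min: "\<forall>y\<in>X. (\<Sum>i=1..N. f i q) \<le> (\<Sum>i=1..N. f i y)"
    and t: "strict_mono t" "(\<lambda>k. x (t k * N)) \<longlonglongrightarrow> q"
    by (rule minimiser_cluster_point)
  define V where "V j = (sqrt \<kappa> * dist (x (j * N)) q)\<^sup>2" for j
  have "convergent V" using minimiser_quasi_fejer(1)[OF q q_min] by (simp add: V_def[abs_def])
  then obtain l where l: "V \<longlonglongrightarrow> l" by (auto simp: convergent_def)
  have "(V \<circ> t) \<longlonglongrightarrow> (sqrt \<kappa> * dist q q)\<^sup>2"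
    using t(2) unfolding V_def o_def by (intro tendsto_intros)
  then have "l = 0" using LIMSEQ_unique[OF LIMSEQ_subseq_LIMSEQ[OF l t(1)]] by simp
  with l have "V \<longlonglongrightarrow> 0" by simp
  then have "(\<lambda>j. sqrt (V j) / sqrt \<kappa>) \<longlonglongrightarrow> sqrt 0 / sqrt \<kappa>"
    using sqrt_kappa_pos by (intro tendsto_intros) auto
  then have "(\<lambda>j. dist (x (j * N)) q) \<longlonglongrightarrow> 0" using sqrt_kappa_pos by (simp add: V_def)
  then show ?thesis using tendsto_if_cycle_starts_tendsto q q_min by blast
qed

end

theorem mainTheorem5:
  fixes \<kappa> :: real and X :: "'a::metric_space set" and N :: nat
    and f :: "nat \<Rightarrow> 'a \<Rightarrow> ereal" and x0 :: 'a and lam :: "nat \<Rightarrow> real"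
    and x :: "nat \<Rightarrow> 'a" and L :: real
  assumes kappa: "\<kappa> > 0"
    and cpt: "compact X" and cat: "CAT_space \<kappa> X"
    and diam: "\<forall>v\<in>X. \<forall>w\<in>X. dist v w < pi / (2 * sqrt \<kappa>)"
    and N: "N \<ge> 1"
    and fin: "\<forall>i\<in>{1..N}. \<forall>y\<in>X. f i y \<noteq> -\<infinity>"
    and f_proper: "\<forall>i\<in>{1..N}. proper_on X (f i)"
    and f_conv: "\<forall>i\<in>{1..N}. geo_convex X (f i)"
    and f_lsc: "\<forall>i\<in>{1..N}. lsc_on X (f i)"
    and attains: "\<exists>z\<in>X. \<forall>y\<in>X. (\<Sum>i=1..N. f i z) \<le> (\<Sum>i=1..N. f i y)"
    and x0: "x0 \<in> X"
    and lam_pos: "\<forall>j. lam j > 0"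
    and lam_div: "\<not> summable lam"
    and lam_sq: "summable (\<lambda>j. (lam j)\<^sup>2)"
    and x_0: "x 0 = x0"
    and x_step: "\<forall>j. \<forall>i\<in>{1..N}. x (j * N + i) = resolvent \<kappa> X (f i) (lam j) (x (j * N + i - 1))"
    and L: "L > 0"
    and Lip: "\<forall>j. \<forall>i\<in>{1..N}.
        f i (x (j * N)) \<le> f i (x (j * N + i)) + ereal (L * dist (x (j * N)) (x (j * N + i))) \<and>
        f i (x (j * N + i - 1)) \<le> f i (x (j * N + i)) + ereal (L * dist (x (j * N + i - 1)) (x (j * N + i)))"
  shows "\<exists>p\<in>X. x \<longlonglongrightarrow> p \<and> (\<forall>y\<in>X. (\<Sum>i=1..N. f i p) \<le> (\<Sum>i=1..N. f i y))"
proof -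
  interpret cyclic_proximal_point \<kappa> X N f lam x L
    by unfold_locales (use assms in auto)
  show ?thesis by (rule iterates_converge_to_minimiser)
qed

end
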